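(* Fix $0<p<1$ and define $m(z)=\langle\phi,(zI-K_\infty)^{-1}\phi\rangle$. Then for every $z\in\mathbb C$ with $|z|>\|K_\infty\|+1$, $$m(z)=\frac{m(z/p)}{1-m(z/p)}+\frac{m(z/(1-p))}{\big(1-m(z/p)\big)\big(1-m(z/p)-m(z/(1-p))\big)}.$$
   Context: Let $S_0(x)=x/3$, $S_2(x)=(x+2)/3$ on $[0,1]$ and let $C$ be the middle-third Cantor set. For $0<p<1$, $\mu_p$ is the unique Borel probability measure on $[0,1]$ with $\mu_p=p\,\mu_p\circ S_0^{-1}+(1-p)\,\mu_p\circ S_2^{-1}$. For words $w\in\{0,2\}^n$, $S_w=S_{w_1}\circ\cdots\circ S_{w_n}$ ($S_\varnothing=\mathrm{id}$), $C_w=S_w(C)$. Inner product $\langle f,g\rangle=\int\overline fg\,d\mu_p$; $\phi=1_C$. $K_mf=\sum_{|u|\le m}\langle1_{C_u},f\rangle1_{C_u}$ and $K_\infty=\lim_{m\to\infty}K_m$ in operator norm (this limit exists and is compact, positive, self-adjoint). *)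

theory Defs
  imports "HOL-Probability.Probability"
begin

definition S0 :: "real \<Rightarrow> real" where "S0 x = x / 3"
definition S2 :: "real \<Rightarrow> real" where "S2 x = (x + 2) / 3"

definition Sl :: "nat \<Rightarrow> real \<Rightarrow> real" where
  "Sl i = (if i = 0 then S0 else S2)"

definition words :: "nat \<Rightarrow> nat list set" where
  "words n = {w. set w \<subseteq> {0, 2} \<and> length w = n}"

fun Sw :: "nat list \<Rightarrow> real \<Rightarrow> real" where
  "Sw [] = id"
| "Sw (i # w) = Sl i \<circ> Sw w"

definition Cantor :: "real set" where
  "Cantor = (\<Inter>n. \<Union>w\<in>words n. Sw w ` {0..1})"

definition Cw :: "nat list \<Rightarrow> real set" where
  "Cw w = Sw w ` Cantor"

definition is_mu :: "real \<Rightarrow> real measure \<Rightarrow> bool" where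
  "is_mu p M \<longleftrightarrow> sets M = sets (restrict_space borel {0..1::real})
     \<and> space M = {0..1} \<and> prob_space M
     \<and> (\<forall>A\<in>sets M. emeasure M A =
            ennreal p * emeasure M (S0 -` A \<inter> space M)
          + ennreal (1 - p) * emeasure M (S2 -` A \<inter> space M))"

definition mu :: "real \<Rightarrow> real measure" where
  "mu p = (THE M. is_mu p M)"

definition inner_mu :: "real \<Rightarrow> (real \<Rightarrow> complex) \<Rightarrow> (real \<Rightarrow> complex) \<Rightarrow> complex" where
  "inner_mu p f g = (LINT x|mu p. cnj (f x) * g x)"

definition L2 :: "real \<Rightarrow> (real \<Rightarrow> complex) \<Rightarrow> bool" where
  "L2 p f \<longleftrightarrow> f \<in> borel_measurable (mu p) \<and> integrable (mu p) (\<lambda>x. (cmod (f x))\<^sup>2)"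

definition L2norm :: "real \<Rightarrow> (real \<Rightarrow> complex) \<Rightarrow> real" where
  "L2norm p f = sqrt (LINT x|mu p. (cmod (f x))\<^sup>2)"

definition phi :: "real \<Rightarrow> complex" where
  "phi = indicator Cantor"

definition Km :: "real \<Rightarrow> nat \<Rightarrow> (real \<Rightarrow> complex) \<Rightarrow> (real \<Rightarrow> complex)" where
  "Km p m f = (\<lambda>x. \<Sum>u\<in>(\<Union>n\<le>m. words n).
                  inner_mu p (indicator (Cw u)) f * indicator (Cw u) x)"

definition is_Kinf :: "real \<Rightarrow> ((real \<Rightarrow> complex) \<Rightarrow> (real \<Rightarrow> complex)) \<Rightarrow> bool" where
  "is_Kinf p K \<longleftrightarrow> (\<forall>f. L2 p f \<longrightarrow> L2 p (K f)) \<and>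
     (\<forall>\<epsilon>>0. \<exists>N. \<forall>m\<ge>N. \<forall>f. L2 p f \<longrightarrow>
        L2norm p (\<lambda>x. Km p m f x - K f x) \<le> \<epsilon> * L2norm p f)"

definition opnorm :: "real \<Rightarrow> ((real \<Rightarrow> complex) \<Rightarrow> (real \<Rightarrow> complex)) \<Rightarrow> real" where
  "opnorm p K = Inf {c. 0 \<le> c \<and> (\<forall>f. L2 p f \<longrightarrow> L2norm p (K f) \<le> c * L2norm p f)}"

text \<open>m(z) = <phi, (zI - K)^{-1} phi>, with (zI-K)^{-1} phi the (a.e. unique) L^2
  solution g of z g - K g = phi.\<close>
definition mfun :: "real \<Rightarrow> ((real \<Rightarrow> complex) \<Rightarrow> (real \<Rightarrow> complex)) \<Rightarrow> complex \<Rightarrow> complex" where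
  "mfun p K z = (THE c. \<exists>g. L2 p g \<and> (AE x in mu p. z * g x - K g x = phi x)
                         \<and> c = inner_mu p phi g)"

end

theory Submission
  imports Defs
begin

text \<open>
  The operator \<open>K = K\<^sub>\<infinity>\<close> is self-similar. Moving \<open>g\<close> onto the first-level piece
  \<open>C\<^sub>i = S\<^sub>i(C)\<close> by \<open>lift i g = 1\<^bsub>C\<^sub>i\<^esub> \<cdot> g \<circ> S\<^sub>i\<^sup>-\<^sup>1\<close>, and noting that the only cylinders
  \<open>C\<^sub>w\<close> meeting \<open>C\<^sub>i\<close> are \<open>C\<close> itself and the \<open>C\<^sub>i\<^sub>w\<close>, one gets
  \<open>K (lift i g) = \<langle>\<phi>, lift i g\<rangle> \<phi> + w\<^sub>i lift i (K g)\<close> with \<open>w\<^sub>0 = p\<close>, \<open>w\<^sub>2 = 1 - p\<close>.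
  Hence if \<open>g\<^sub>i\<close> solves \<open>(z/w\<^sub>i - K) g\<^sub>i = \<phi>\<close>, then \<open>lift i g\<^sub>i\<close> solves \<open>(z - K) f = \<phi>\<close> up to
  multiples of \<open>\<phi>\<close> and of \<open>1\<^bsub>C\<^sub>i\<^esub>\<close>. Since \<open>1\<^bsub>C\<^sub>0\<^esub> + 1\<^bsub>C\<^sub>2\<^esub> = \<phi>\<close>, with \<open>a = m(z/p)\<close> and
  \<open>b = m(z/(1-p))\<close> the function \<open>(lift 0 g\<^sub>0 / p + lift 2 g\<^sub>2 / (1-p)) / (1 - a - b)\<close> solves
  \<open>(z - K) f = \<phi>\<close>, so \<open>m(z) = (a + b) / (1 - a - b)\<close>, which is the stated formula.
  For \<open>|z| > \<parallel>K\<parallel>\<close> the solutions exist by the Neumann series, and \<open>|a| < p\<close>, \<open>|b| < 1 - p\<close>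
  keep the denominators away from 0.
\<close>

lemma words_0: "words 0 = {[]}"
  by (auto simp: words_def)

lemma words_Suc: "words (Suc n) = (\<lambda>w. 0 # w) ` words n \<union> (\<lambda>w. 2 # w) ` words n"
  by (auto simp: words_def length_Suc_conv)

lemma finite_words: "finite (words n)"
  by (induction n) (auto simp: words_0 words_Suc)

definition cantor_level :: "nat \<Rightarrow> real set" where
  "cantor_level n = (\<Union>w\<in>words n. Sw w ` {0..1})"

lemma cantor_level_0: "cantor_level 0 = {0..1}"
  by (simp add: cantor_level_def words_0)

lemma cantor_level_Suc: "cantor_level (Suc n) = S0 ` cantor_level n \<union> S2 ` cantor_level n"
  by (auto simp: cantor_level_def words_Suc image_UN image_comp Sl_def)

lemma Sl_in_unit: "x \<in> {0..1} \<Longrightarrow> Sl i x \<in> {0..1}"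
  by (auto simp: Sl_def S0_def S2_def)

lemma cantor_level_subset: "cantor_level n \<subseteq> {0..1}"
  by (induction n) (fastforce simp: cantor_level_0 cantor_level_Suc S0_def S2_def)+

lemma Cantor_eq_INT_cantor_level: "Cantor = (\<Inter>n. cantor_level n)"
  by (simp add: Cantor_def cantor_level_def)

lemma Cantor_subset: "Cantor \<subseteq> {0..1}"
  using cantor_level_0 Cantor_eq_INT_cantor_level by auto

lemma Sl_in_Cantor:
  assumes y: "y \<in> Cantor"
  shows "Sl i y \<in> Cantor"
proof -
  have "Sl i y \<in> cantor_level n" for n
  proof (cases n)
    case 0
    then show ?thesis using y Cantor_subset Sl_in_unit by (auto simp: cantor_level_0)
  next
    case (Suc m)
    then show ?thesis using y by (auto simp: cantor_level_Suc Cantor_eq_INT_cantor_level Sl_def)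
  qed
  then show ?thesis by (simp add: Cantor_eq_INT_cantor_level)
qed

lemma Cantor_self_similar: "Cantor = S0 ` Cantor \<union> S2 ` Cantor"
proof
  show "S0 ` Cantor \<union> S2 ` Cantor \<subseteq> Cantor"
    using Sl_in_Cantor[of _ 0] Sl_in_Cantor[of _ 2] by (auto simp: Sl_def)
  show "Cantor \<subseteq> S0 ` Cantor \<union> S2 ` Cantor"
  proof
    fix x assume "x \<in> Cantor"
    then have level: "x \<in> S0 ` cantor_level n \<union> S2 ` cantor_level n" for n
      using cantor_level_Suc[of n] by (auto simp: Cantor_eq_INT_cantor_level)
    show "x \<in> S0 ` Cantor \<union> S2 ` Cantor"
    proof (cases "x \<le> 1/2")
      case True
      have "x \<notin> S2 ` cantor_level n" for n
        using True cantor_level_subset[of n] by (auto simp: S2_def)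
      then have "3 * x \<in> cantor_level n" for n
        using level[of n] by (auto simp: S0_def)
      then have "3 * x \<in> Cantor" by (simp add: Cantor_eq_INT_cantor_level)
      moreover have "x = S0 (3 * x)" by (simp add: S0_def)
      ultimately show ?thesis by blast
    next
      case False
      have "x \<notin> S0 ` cantor_level n" for n
        using False cantor_level_subset[of n] by (auto simp: S0_def)
      then have "3 * x - 2 \<in> cantor_level n" for n
        using level[of n] by (auto simp: S2_def add_divide_distrib)
      then have "3 * x - 2 \<in> Cantor" by (simp add: Cantor_eq_INT_cantor_level)
      moreover have "x = S2 (3 * x - 2)" by (simp add: S2_def)
      ultimately show ?thesis by blast
    qed
  qed
qed

lemma continuous_Sw: "continuous_on UNIV (Sw w)"
proof (induction w)
  case (Cons i w)
  have "continuous_on UNIV (Sl i)"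
    by (auto simp: Sl_def S0_def S2_def intro!: continuous_intros)
  then show ?case using Cons by (auto intro: continuous_on_compose2[where t=UNIV])
qed (simp add: continuous_on_id)

lemma compact_Cantor: "compact Cantor"
proof -
  have "compact (cantor_level n)" for n
    unfolding cantor_level_def
    by (intro compact_UN finite_words compact_continuous_image
          continuous_on_subset[OF continuous_Sw]) auto
  then have "closed Cantor"
    unfolding Cantor_eq_INT_cantor_level by (intro closed_INT) (auto intro: compact_imp_closed)
  then show ?thesis
    using Cantor_subset by (meson bounded_closed_interval bounded_subset compact_eq_bounded_closed)
qed

lemma Cw_Nil: "Cw [] = Cantor"
  by (simp add: Cw_def)

lemma Cw_Cons: "Cw (i # w) = Sl i ` Cw w"
  by (simp add: Cw_def image_comp)

lemma compact_Cw: "compact (Cw w)"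
  unfolding Cw_def
  by (intro compact_continuous_image continuous_on_subset[OF continuous_Sw] compact_Cantor) auto

lemma sets_Cw [measurable]: "Cw w \<in> sets borel"
  using compact_Cw by (simp add: compact_imp_closed borel_closed)

lemma sets_Cantor [measurable]: "Cantor \<in> sets borel"
  using compact_Cantor by (simp add: compact_imp_closed borel_closed)

lemma Cw_subset_Cantor: "Cw w \<subseteq> Cantor"
  by (induction w) (auto simp: Cw_Nil Cw_Cons Sl_in_Cantor)

lemma Cw_subset_unit: "Cw w \<subseteq> {0..1}"
  using Cw_subset_Cantor Cantor_subset by blast

section \<open>The self-similar measure\<close>

abbreviation unit_borel :: "real measure" where
  "unit_borel \<equiv> restrict_space borel {0..1}"

lemma sets_unit_borel_iff: "A \<in> sets unit_borel \<longleftrightarrow> A \<subseteq> {0..1} \<and> A \<in> sets borel"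
  by (subst sets_restrict_space_iff) auto

lemma measurable_S0 [measurable]: "S0 \<in> borel_measurable borel"
  unfolding S0_def by measurable

lemma measurable_S2 [measurable]: "S2 \<in> borel_measurable borel"
  unfolding S2_def by measurable

lemma measurable_unit_borel:
  assumes "f \<in> borel_measurable borel" "\<And>x. x \<in> {0..1} \<Longrightarrow> f x \<in> {0..1}"
  shows "f \<in> measurable unit_borel unit_borel"
  using assms by (intro measurable_restrict_space3) auto

lemma S0_unit_borel: "S0 \<in> measurable unit_borel unit_borel"
  by (rule measurable_unit_borel) (auto simp: S0_def)

lemma S2_unit_borel: "S2 \<in> measurable unit_borel unit_borel"
  by (rule measurable_unit_borel) (auto simp: S2_def)

definition ternary_digit :: "bool \<Rightarrow> real" where
  "ternary_digit b = (if b then 0 else 2)"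

definition ternary_value :: "bool stream \<Rightarrow> real" where
  "ternary_value \<omega> = (\<Sum>n. ternary_digit (\<omega> !! n) / 3 ^ Suc n)"

lemma ternary_digit_bounds: "0 \<le> ternary_digit b" "ternary_digit b \<le> 2"
  by (auto simp: ternary_digit_def)

lemma sums_two_thirds_powers: "(\<lambda>n. 2 / (3::real) ^ Suc n) sums 1"
proof -
  have "(\<lambda>n. (2/3) * (1/3::real) ^ n) sums ((2/3) * (1 / (1 - 1/3)))"
    by (intro sums_mult geometric_sums) auto
  then show ?thesis by (simp add: power_divide field_simps)
qed

lemma summable_ternary_value: "summable (\<lambda>n. ternary_digit (\<omega> !! n) / 3 ^ Suc n)"
  by (rule summable_comparison_test'[OF sums_summable[OF sums_two_thirds_powers], of 0])
    (simp add: ternary_digit_bounds divide_right_mono)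

lemma ternary_value_bounds: "0 \<le> ternary_value \<omega>" "ternary_value \<omega> \<le> 1"
proof -
  show "0 \<le> ternary_value \<omega>" unfolding ternary_value_def
    by (intro suminf_nonneg summable_ternary_value) (auto simp: ternary_digit_bounds)
  have "ternary_value \<omega> \<le> (\<Sum>n. 2 / (3::real) ^ Suc n)" unfolding ternary_value_def
    using sums_summable[OF sums_two_thirds_powers]
    by (intro suminf_le summable_ternary_value) (simp_all add: ternary_digit_bounds divide_right_mono)
  then show "ternary_value \<omega> \<le> 1" using sums_two_thirds_powers by (simp add: sums_iff)
qed

lemma ternary_value_SCons: "ternary_value (b ## \<omega>) = (if b then S0 else S2) (ternary_value \<omega>)"
proof -
  have "ternary_value (b ## \<omega>) = ternary_digit b / 3 + (\<Sum>n. (1/3) * (ternary_digit (\<omega> !! n) / 3 ^ Suc n))"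
    using suminf_split_head[OF summable_ternary_value[of "b ## \<omega>"]] by (simp add: ternary_value_def)
  also have "\<dots> = ternary_digit b / 3 + (1/3) * ternary_value \<omega>"
    unfolding ternary_value_def by (simp only: suminf_mult[OF summable_ternary_value])
  finally show ?thesis by (auto simp: ternary_digit_def S0_def S2_def)
qed

abbreviation coin_flips :: "real \<Rightarrow> bool stream measure" where
  "coin_flips p \<equiv> stream_space (measure_pmf (bernoulli_pmf p))"

lemma measurable_ternary_value: "ternary_value \<in> measurable (coin_flips p) unit_borel"
proof -
  have "ternary_value \<in> borel_measurable (coin_flips p)"
    unfolding ternary_value_def by measurable
  then show ?thesis by (intro measurable_restrict_space2) (auto simp: ternary_value_bounds)
qed

text \<open>\<open>\<mu>\<^sub>p\<close> is the law of \<open>\<Sum> d\<^sub>n 3\<^sup>-\<^sup>n\<close> for i.i.d. digits \<open>d\<^sub>n\<close> equal to 0 with probability \<open>p\<close>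
  and to 2 otherwise; conditioning on the first digit gives the self-similarity.\<close>

definition cantor_distr :: "real \<Rightarrow> real measure" where
  "cantor_distr p = distr (coin_flips p) unit_borel ternary_value"

lemma emeasure_cantor_distr_preimage:
  assumes S: "S \<in> measurable unit_borel unit_borel" and A: "A \<in> sets unit_borel"
  shows "emeasure (cantor_distr p) (S -` A \<inter> {0..1}) = (\<integral>\<^sup>+\<omega>. indicator A (S (ternary_value \<omega>)) \<partial>coin_flips p)"
proof -
  have SA: "S -` A \<inter> {0..1} \<in> sets unit_borel"
    using measurable_sets[OF S A] by (simp add: space_restrict_space)
  then have "emeasure (cantor_distr p) (S -` A \<inter> {0..1}) = (\<integral>\<^sup>+x. indicator (S -` A \<inter> {0..1}) x \<partial>cantor_distr p)"
    by (simp add: cantor_distr_def)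
  also have "\<dots> = (\<integral>\<^sup>+\<omega>. indicator (S -` A \<inter> {0..1}) (ternary_value \<omega>) \<partial>coin_flips p)"
    unfolding cantor_distr_def
    by (intro nn_integral_distr measurable_ternary_value borel_measurable_indicator) (simp add: SA)
  also have "\<dots> = (\<integral>\<^sup>+\<omega>. indicator A (S (ternary_value \<omega>)) \<partial>coin_flips p)"
    by (intro nn_integral_cong) (auto simp: ternary_value_bounds split: split_indicator)
  finally show ?thesis .
qed

lemma is_mu_cantor_distr:
  assumes p: "0 < p" "p < 1"
  shows "is_mu p (cantor_distr p)"
proof -
  have sets: "sets (cantor_distr p) = sets unit_borel" and space: "space (cantor_distr p) = {0..1}"
    by (simp_all add: cantor_distr_def space_restrict_space)
  have "prob_space (cantor_distr p)"
    unfolding cantor_distr_def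
    by (intro prob_space.prob_space_distr prob_space.prob_space_stream_space[OF prob_space_measure_pmf] measurable_ternary_value)
  moreover have "emeasure (cantor_distr p) A = ennreal p * emeasure (cantor_distr p) (S0 -` A \<inter> space (cantor_distr p))
      + ennreal (1 - p) * emeasure (cantor_distr p) (S2 -` A \<inter> space (cantor_distr p))"
    if "A \<in> sets (cantor_distr p)" for A
  proof -
    have A: "A \<in> sets unit_borel"
      using that unfolding sets .
    have "emeasure (cantor_distr p) A = (\<integral>\<^sup>+\<omega>. indicator A (ternary_value \<omega>) \<partial>coin_flips p)"
      using emeasure_cantor_distr_preimage[OF measurable_id A] A
      by (simp add: sets_unit_borel_iff Int_absorb2)
    also have "\<dots> = (\<integral>\<^sup>+b. (\<integral>\<^sup>+\<omega>. indicator A (ternary_value (b ## \<omega>)) \<partial>coin_flips p) \<partial>bernoulli_pmf p)"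
      using measurable_compose[OF measurable_ternary_value[of p] borel_measurable_indicator[OF A]]
      by (intro prob_space.nn_integral_stream_space[OF prob_space_measure_pmf]) simp
    also have "\<dots> = (\<integral>\<^sup>+\<omega>. indicator A (S0 (ternary_value \<omega>)) \<partial>coin_flips p) * p
                   + (\<integral>\<^sup>+\<omega>. indicator A (S2 (ternary_value \<omega>)) \<partial>coin_flips p) * (1 - p)"
      using p by (simp add: ternary_value_SCons)
    finally show ?thesis
      using emeasure_cantor_distr_preimage[OF S0_unit_borel A] emeasure_cantor_distr_preimage[OF S2_unit_borel A]
      by (simp add: space mult.commute)
  qed
  ultimately show ?thesis
    unfolding is_mu_def using sets space by blast
qed

lemma is_muD:
  assumes "is_mu p M"
  shows "sets M = sets unit_borel" "space M = {0..1}" "prob_space M"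
    "\<And>A. A \<in> sets M \<Longrightarrow> emeasure M A = ennreal p * emeasure M (S0 -` A \<inter> space M)
          + ennreal (1 - p) * emeasure M (S2 -` A \<inter> space M)"
  using assms unfolding is_mu_def by auto

lemma measurable_is_mu:
  assumes "is_mu p M" "f \<in> measurable borel N"
  shows "f \<in> measurable M N"
  using measurable_restrict_space1[OF assms(2), of "{0..1}"] is_muD(1)[OF assms(1)]
  by (simp cong: measurable_cong_sets)

definition unit_cdf :: "real measure \<Rightarrow> real \<Rightarrow> real" where
  "unit_cdf M x = measure M ({..x} \<inter> {0..1})"

lemma unit_cdf_self_similar:
  assumes p: "0 < p" "p < 1" and M: "is_mu p M"
  shows "unit_cdf M x = p * unit_cdf M (3 * x) + (1 - p) * unit_cdf M (3 * x - 2)"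
proof -
  interpret prob_space M using is_muD[OF M] by simp
  have space: "space M = {0..1}" using is_muD[OF M] by simp
  have sets: "{..t} \<inter> {0..1} \<in> sets M" for t :: real
    using is_muD(1)[OF M] by (simp add: sets_unit_borel_iff)
  have "S0 -` ({..x} \<inter> {0..1}) \<inter> space M = {..3 * x} \<inter> {0..1}"
       "S2 -` ({..x} \<inter> {0..1}) \<inter> space M = {..3 * x - 2} \<inter> {0..1}"
    by (auto simp: space S0_def S2_def)
  then have "ennreal (unit_cdf M x) = ennreal (p * unit_cdf M (3 * x) + (1 - p) * unit_cdf M (3 * x - 2))"
    using is_muD(4)[OF M sets[of x]] p
    by (simp add: unit_cdf_def emeasure_eq_measure ennreal_mult ennreal_plus)
  moreover have "0 \<le> p * unit_cdf M (3 * x) + (1 - p) * unit_cdf M (3 * x - 2)"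
    using p by (simp add: unit_cdf_def)
  ultimately show ?thesis
    by (simp add: unit_cdf_def)
qed

lemma unit_cdf_outside:
  assumes M: "is_mu p M"
  shows "x < 0 \<Longrightarrow> unit_cdf M x = 0" and "1 \<le> x \<Longrightarrow> unit_cdf M x = 1"
proof -
  interpret prob_space M using is_muD[OF M] by simp
  show "x < 0 \<Longrightarrow> unit_cdf M x = 0"
    unfolding unit_cdf_def by (subgoal_tac "{..x} \<inter> {0..1} = {}") auto
  assume "1 \<le> x"
  then have "{..x} \<inter> {0..1} = space M" using is_muD(2)[OF M] by auto
  then show "unit_cdf M x = 1" unfolding unit_cdf_def by (simp only: prob_space)
qed

lemma unit_cdf_bounds: "is_mu p M \<Longrightarrow> 0 \<le> unit_cdf M x \<and> unit_cdf M x \<le> 1"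
  using prob_space.prob_le_1[OF is_muD(3)] by (simp add: unit_cdf_def)

text \<open>The difference \<open>d\<close> of two such distribution functions satisfies
  \<open>d x = p d(3x)\<close> on \<open>[0,1/3)\<close> and \<open>d x = (1-p) d(3x-2)\<close> on \<open>[1/3,1)\<close>, so \<open>\<bar>d\<bar> \<le> (max p (1-p))\<^sup>n\<close> for all \<open>n\<close>.\<close>

lemma unit_cdf_unique:
  assumes p: "0 < p" "p < 1" and M1: "is_mu p M1" and M2: "is_mu p M2"
  shows "unit_cdf M1 x = unit_cdf M2 x"
proof -
  define q where "q = max p (1 - p)"
  have q: "0 \<le> q" "q < 1" "p \<le> q" "1 - p \<le> q" using p by (auto simp: q_def)
  define d where "d t = unit_cdf M1 t - unit_cdf M2 t" for t
  have d_outside: "d t = 0" if "t < 0 \<or> 1 \<le> t" for t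
    using that unit_cdf_outside[OF M1] unit_cdf_outside[OF M2] by (auto simp: d_def)
  have d_eq: "d t = p * d (3 * t) + (1 - p) * d (3 * t - 2)" for t
    using unit_cdf_self_similar[OF p M1, of t] unit_cdf_self_similar[OF p M2, of t]
    by (simp add: d_def algebra_simps)
  have "\<bar>d t\<bar> \<le> q ^ n" for n t
  proof (induction n arbitrary: t)
    case 0
    show ?case
      using unit_cdf_bounds[OF M1, of t] unit_cdf_bounds[OF M2, of t] by (simp add: d_def abs_le_iff)
  next
    case (Suc n)
    show ?case
    proof (cases "3 * t < 1")
      case True
      then have "\<bar>d t\<bar> = p * \<bar>d (3 * t)\<bar>"
        using d_eq[of t] d_outside[of "3 * t - 2"] p by (simp add: abs_mult)
      also have "\<dots> \<le> q * q ^ n" using Suc[of "3 * t"] p q by (intro mult_mono) auto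
      finally show ?thesis by simp
    next
      case False
      then have "\<bar>d t\<bar> = (1 - p) * \<bar>d (3 * t - 2)\<bar>"
        using d_eq[of t] d_outside[of "3 * t"] p by (simp add: abs_mult)
      also have "\<dots> \<le> q * q ^ n" using Suc[of "3 * t - 2"] p q by (intro mult_mono) auto
      finally show ?thesis by simp
    qed
  qed
  moreover have "(\<lambda>n. q ^ n) \<longlonglongrightarrow> 0" using q by (intro LIMSEQ_power_zero) auto
  ultimately have "\<bar>d x\<bar> \<le> 0"
    by (intro LIMSEQ_le_const[of "\<lambda>n. q ^ n"]) auto
  then show ?thesis by (simp add: d_def)
qed

lemma is_mu_unique:
  assumes p: "0 < p" "p < 1" and M1: "is_mu p M1" and M2: "is_mu p M2"
  shows "M1 = M2"
proof -
  have distr_eq: "emeasure M A = emeasure (distr M borel id) A" if M: "is_mu p M" and A: "A \<in> sets M" for M A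
  proof -
    have "A \<in> sets borel" "A \<subseteq> space M" using A is_muD(1,2)[OF M] by (auto simp: sets_unit_borel_iff)
    then show ?thesis
      by (subst emeasure_distr) (auto intro: measurable_is_mu[OF M measurable_ident] simp: Int_absorb2)
  qed
  have real_distribution: "real_distribution (distr M borel id)" if M: "is_mu p M" for M
    using prob_space.prob_space_distr[OF is_muD(3)[OF M] measurable_is_mu[OF M measurable_ident]]
    by (auto simp: real_distribution_def real_distribution_axioms_def)
  have cdf: "cdf (distr M borel id) x = unit_cdf M x" if M: "is_mu p M" for M x
    using is_muD(2)[OF M] unfolding cdf_def unit_cdf_def
    by (subst measure_distr) (auto intro: measurable_is_mu[OF M measurable_ident])
  have "distr M1 borel id = distr M2 borel id"
    by (intro cdf_unique real_distribution M1 M2 ext) (simp add: cdf[OF M1] cdf[OF M2] unit_cdf_unique[OF p M1 M2])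
  then show ?thesis
    using is_muD(1)[OF M1] is_muD(1)[OF M2] distr_eq[OF M1] distr_eq[OF M2]
    by (intro measure_eqI) auto
qed

lemma is_mu_mu: "0 < p \<Longrightarrow> p < 1 \<Longrightarrow> is_mu p (mu p)"
  unfolding mu_def using is_mu_cantor_distr is_mu_unique by (metis theI)

lemma nn_integral_indicator_comp:
  assumes S: "S \<in> measurable M M" and A: "A \<in> sets M"
  shows "(\<integral>\<^sup>+y. indicator A (S y) \<partial>M) = emeasure M (S -` A \<inter> space M)"
proof -
  have "(\<integral>\<^sup>+y. indicator A (S y) \<partial>M) = (\<integral>\<^sup>+y. indicator (S -` A \<inter> space M) y \<partial>M)"
    by (intro nn_integral_cong) (auto split: split_indicator)
  then show ?thesis
    using measurable_sets[OF S A] by simp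
qed

locale cantor_measure =
  fixes p :: real
  assumes p_pos: "0 < p" and p_less_1: "p < 1"
begin

lemma is_mu: "is_mu p (mu p)"
  using is_mu_mu p_pos p_less_1 by simp

sublocale prob_space "mu p"
  using is_muD(3)[OF is_mu] .

lemma sets_mu: "sets (mu p) = sets unit_borel"
  using is_muD(1)[OF is_mu] .

lemma space_mu: "space (mu p) = {0..1}"
  using is_muD(2)[OF is_mu] .

lemma measurable_mu: "f \<in> measurable borel N \<Longrightarrow> f \<in> measurable (mu p) N"
  using measurable_is_mu[OF is_mu] .

lemma measurable_mu_mu: "f \<in> measurable unit_borel unit_borel \<Longrightarrow> f \<in> measurable (mu p) (mu p)"
  using measurable_cong_sets[OF sets_mu sets_mu] by simp

lemma S0_measurable_mu [measurable]: "S0 \<in> measurable (mu p) (mu p)"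
  using measurable_mu_mu[OF S0_unit_borel] .

lemma S2_measurable_mu [measurable]: "S2 \<in> measurable (mu p) (mu p)"
  using measurable_mu_mu[OF S2_unit_borel] .

lemma Sl_in_space: "y \<in> space (mu p) \<Longrightarrow> Sl i y \<in> space (mu p)"
  using Sl_in_unit by (simp add: space_mu)

lemma nn_integral_comp_SUP:
  assumes S: "S \<in> measurable (mu p) (mu p)" and U: "incseq U" "\<And>i. U i \<in> borel_measurable (mu p)"
  shows "(\<integral>\<^sup>+y. (SUP i. U i) (S y) \<partial>mu p) = (SUP i. \<integral>\<^sup>+y. U i (S y) \<partial>mu p)"
  using U S unfolding SUP_apply
  by (intro nn_integral_monotone_convergence_SUP) (auto simp: incseq_def le_fun_def)

lemma nn_integral_self_similar:
  fixes f :: "real \<Rightarrow> ennreal"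
  assumes "f \<in> borel_measurable (mu p)"
  shows "(\<integral>\<^sup>+x. f x \<partial>mu p) = ennreal p * (\<integral>\<^sup>+y. f (S0 y) \<partial>mu p)
           + ennreal (1 - p) * (\<integral>\<^sup>+y. f (S2 y) \<partial>mu p)"
  using assms
proof (induction rule: borel_measurable_induct)
  case (cong f g)
  have "(\<integral>\<^sup>+y. f (S y) \<partial>mu p) = (\<integral>\<^sup>+y. g (S y) \<partial>mu p)" if "S = S0 \<or> S = S2" for S
    using cong(3) Sl_in_space[of _ 0] Sl_in_space[of _ 2] that
    by (intro nn_integral_cong) (auto simp: Sl_def)
  moreover have "(\<integral>\<^sup>+x. f x \<partial>mu p) = (\<integral>\<^sup>+x. g x \<partial>mu p)"
    using cong(3) by (intro nn_integral_cong) auto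
  ultimately show ?case using cong(4) by simp
next
  case (set A)
  then show ?case
    using is_muD(4)[OF is_mu set] nn_integral_indicator_comp[OF S0_measurable_mu set]
      nn_integral_indicator_comp[OF S2_measurable_mu set] by simp
next
  case (mult u c)
  then show ?case by (simp add: nn_integral_cmult algebra_simps)
next
  case (add u v)
  then show ?case by (simp add: nn_integral_add algebra_simps)
next
  case (seq U)
  have "incseq U" using seq by blast
  then have mono: "incseq (\<lambda>i. \<integral>\<^sup>+y. U i (S y) \<partial>mu p)" for S
    by (auto simp: incseq_def le_fun_def intro!: nn_integral_mono)
  have "(\<integral>\<^sup>+x. (SUP i. U i) x \<partial>mu p) = (SUP i. \<integral>\<^sup>+x. U i x \<partial>mu p)"
    using nn_integral_comp_SUP[of id U] seq by (simp add: measurable_ident_sets)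
  also have "\<dots> = (SUP i. ennreal p * (\<integral>\<^sup>+y. U i (S0 y) \<partial>mu p)
           + ennreal (1 - p) * (\<integral>\<^sup>+y. U i (S2 y) \<partial>mu p))"
    using seq by simp
  also have "\<dots> = (SUP i. ennreal p * (\<integral>\<^sup>+y. U i (S0 y) \<partial>mu p))
           + (SUP i. ennreal (1 - p) * (\<integral>\<^sup>+y. U i (S2 y) \<partial>mu p))"
    using mono[of S0] mono[of S2]
    by (intro ennreal_SUP_add) (auto simp: incseq_def intro: mult_left_mono)
  also have "\<dots> = ennreal p * (\<integral>\<^sup>+y. (SUP i. U i) (S0 y) \<partial>mu p)
           + ennreal (1 - p) * (\<integral>\<^sup>+y. (SUP i. U i) (S2 y) \<partial>mu p)"
    using seq by (simp only: nn_integral_comp_SUP S0_measurable_mu S2_measurable_mu SUP_mult_left_ennreal)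
  finally show ?case .
qed

lemma integrable_comp_S:
  fixes F :: "real \<Rightarrow> 'b::{banach, second_countable_topology}"
  assumes F: "integrable (mu p) F" and S: "S = S0 \<or> S = S2"
  shows "integrable (mu p) (\<lambda>y. F (S y))"
proof -
  have [measurable]: "F \<in> borel_measurable (mu p)" "S \<in> measurable (mu p) (mu p)"
    using F S by auto
  have "(\<integral>\<^sup>+x. ennreal (norm (F x)) \<partial>mu p) < \<infinity>"
    using F by (simp add: integrable_iff_bounded)
  moreover have "(\<integral>\<^sup>+x. ennreal (norm (F x)) \<partial>mu p)
      = ennreal p * (\<integral>\<^sup>+y. ennreal (norm (F (S0 y))) \<partial>mu p)
        + ennreal (1 - p) * (\<integral>\<^sup>+y. ennreal (norm (F (S2 y))) \<partial>mu p)"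
    by (rule nn_integral_self_similar) measurable
  ultimately have "(\<integral>\<^sup>+y. ennreal (norm (F (S y))) \<partial>mu p) < \<infinity>"
    using S p_pos p_less_1 by (auto simp: ennreal_mult_less_top top_unique)
  then show ?thesis by (simp add: integrable_iff_bounded)
qed

lemma integral_self_similar_real:
  fixes F :: "real \<Rightarrow> real"
  assumes F: "integrable (mu p) F"
  shows "integral\<^sup>L (mu p) F = p * integral\<^sup>L (mu p) (\<lambda>y. F (S0 y)) + (1 - p) * integral\<^sup>L (mu p) (\<lambda>y. F (S2 y))"
proof -
  have positive_part: "enn2real (\<integral>\<^sup>+x. ennreal (H x) \<partial>mu p)
      = p * enn2real (\<integral>\<^sup>+y. ennreal (H (S0 y)) \<partial>mu p) + (1 - p) * enn2real (\<integral>\<^sup>+y. ennreal (H (S2 y)) \<partial>mu p)"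
    if H: "integrable (mu p) H" for H :: "real \<Rightarrow> real"
  proof -
    have [measurable]: "H \<in> borel_measurable (mu p)" using H by auto
    have finite: "(\<integral>\<^sup>+y. ennreal (H (S y)) \<partial>mu p) < \<infinity>" if "S = S0 \<or> S = S2" for S
    proof -
      have "(\<integral>\<^sup>+y. ennreal (H (S y)) \<partial>mu p) \<le> (\<integral>\<^sup>+y. ennreal (norm (H (S y))) \<partial>mu p)"
        by (intro nn_integral_mono) auto
      also have "\<dots> < \<infinity>"
        using integrable_comp_S[OF H that] by (simp add: integrable_iff_bounded)
      finally show ?thesis .
    qed
    have "(\<integral>\<^sup>+x. ennreal (H x) \<partial>mu p) = ennreal p * (\<integral>\<^sup>+y. ennreal (H (S0 y)) \<partial>mu p)
           + ennreal (1 - p) * (\<integral>\<^sup>+y. ennreal (H (S2 y)) \<partial>mu p)"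
      by (rule nn_integral_self_similar) measurable
    then show ?thesis using finite p_pos p_less_1
      by (simp add: enn2real_plus enn2real_mult ennreal_mult_less_top)
  qed
  have "integrable (mu p) (\<lambda>y. F (S0 y))" "integrable (mu p) (\<lambda>y. F (S2 y))"
    using integrable_comp_S[OF F] by auto
  then show ?thesis
    using positive_part[OF F] positive_part[of "\<lambda>x. - F x"] F
    by (simp add: real_lebesgue_integral_def algebra_simps)
qed

lemma integral_self_similar:
  fixes F :: "real \<Rightarrow> complex"
  assumes F: "integrable (mu p) F"
  shows "integral\<^sup>L (mu p) F = p * integral\<^sup>L (mu p) (\<lambda>y. F (S0 y)) + (1 - p) * integral\<^sup>L (mu p) (\<lambda>y. F (S2 y))"
  using integral_self_similar_real[of "\<lambda>x. Re (F x)"] integral_self_similar_real[of "\<lambda>x. Im (F x)"]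
    F integrable_comp_S[OF F, of S0] integrable_comp_S[OF F, of S2]
  by (simp add: complex_eq_iff)

end

section \<open>The space \<open>L\<^sup>2(\<mu>\<^sub>p)\<close>\<close>

lemma borel_measurable_cnj [measurable (raw)]:
  "f \<in> borel_measurable M \<Longrightarrow> (\<lambda>x. cnj (f x)) \<in> borel_measurable M"
  by (erule measurable_compose)
    (intro borel_measurable_continuous_onI continuous_on_cnj continuous_on_id)

context cantor_measure
begin

lemma L2_measurable [measurable_dest]: "L2 p f \<Longrightarrow> f \<in> borel_measurable (mu p)"
  and L2_integrable_sq: "L2 p f \<Longrightarrow> integrable (mu p) (\<lambda>x. (cmod (f x))\<^sup>2)"
  by (auto simp: L2_def)

lemma L2_bounded:
  assumes "f \<in> borel_measurable (mu p)" "\<And>x. x \<in> space (mu p) \<Longrightarrow> cmod (f x) \<le> B"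
  shows "L2 p f"
  unfolding L2_def using assms
  by (auto intro!: Bochner_Integration.integrable_bound[where f="\<lambda>x. B\<^sup>2"] AE_I2 power_mono)

lemma L2_indicator:
  assumes "A \<in> sets borel"
  shows "L2 p (indicator A :: real \<Rightarrow> complex)"
  using measurable_mu[OF borel_measurable_indicator[OF assms]]
  by (rule L2_bounded[of _ 1]) (simp add: indicator_def)

lemma L2_phi: "L2 p phi"
  unfolding phi_def by (rule L2_indicator[OF sets_Cantor])

lemma L2_cmult: "L2 p f \<Longrightarrow> L2 p (\<lambda>x. c * f x)"
  unfolding L2_def by (auto simp: norm_mult power_mult_distrib)

lemma L2_of_norm: "L2 p f \<Longrightarrow> L2 p (\<lambda>x. complex_of_real (cmod (f x)))"
  unfolding L2_def by (auto simp: norm_of_real)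

lemma L2_add:
  assumes f: "L2 p f" and g: "L2 p g"
  shows "L2 p (\<lambda>x. f x + g x)"
proof -
  have bound: "(cmod (a + b))\<^sup>2 \<le> 2 * (cmod a)\<^sup>2 + 2 * (cmod b)\<^sup>2" for a b :: complex
  proof -
    have "(cmod (a + b))\<^sup>2 \<le> (cmod a + cmod b)\<^sup>2"
      by (intro power_mono norm_triangle_ineq) simp
    also have "\<dots> \<le> 2 * (cmod a)\<^sup>2 + 2 * (cmod b)\<^sup>2"
      using sum_squares_bound[of "cmod a" "cmod b"] by (simp add: power2_sum)
    finally show ?thesis .
  qed
  show ?thesis
    unfolding L2_def
  proof
    show "(\<lambda>x. f x + g x) \<in> borel_measurable (mu p)" using f g by measurable
    show "integrable (mu p) (\<lambda>x. (cmod (f x + g x))\<^sup>2)"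
    proof (rule Bochner_Integration.integrable_bound)
      show "integrable (mu p) (\<lambda>x. 2 * (cmod (f x))\<^sup>2 + 2 * (cmod (g x))\<^sup>2)"
        using L2_integrable_sq[OF f] L2_integrable_sq[OF g] by simp
      show "AE x in mu p. norm ((cmod (f x + g x))\<^sup>2) \<le> norm (2 * (cmod (f x))\<^sup>2 + 2 * (cmod (g x))\<^sup>2)"
        using bound by simp
    qed (use f g in measurable)
  qed
qed

lemma L2_diff: "L2 p f \<Longrightarrow> L2 p g \<Longrightarrow> L2 p (\<lambda>x. f x - g x)"
  using L2_add[of f "\<lambda>x. -1 * g x"] L2_cmult[of g "-1"] by simp

lemma L2_sum: "finite I \<Longrightarrow> (\<And>i. i \<in> I \<Longrightarrow> L2 p (f i)) \<Longrightarrow> L2 p (\<lambda>x. \<Sum>i\<in>I. f i x)"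
  by (induction I rule: finite_induct) (auto intro: L2_add L2_bounded[of _ 0])

lemma integrable_L2_product:
  assumes f: "L2 p f" and g: "L2 p g"
  shows "integrable (mu p) (\<lambda>x. cnj (f x) * g x)"
proof -
  have bound: "a * b \<le> a\<^sup>2 + b\<^sup>2" if "0 \<le> a" "0 \<le> b" for a b :: real
    using sum_squares_bound[of a b] mult_nonneg_nonneg[OF that] by linarith
  show ?thesis
  proof (rule Bochner_Integration.integrable_bound)
    show "integrable (mu p) (\<lambda>x. (cmod (f x))\<^sup>2 + (cmod (g x))\<^sup>2)"
      using L2_integrable_sq[OF f] L2_integrable_sq[OF g] by simp
    show "AE x in mu p. norm (cnj (f x) * g x) \<le> norm ((cmod (f x))\<^sup>2 + (cmod (g x))\<^sup>2)"
      using bound by (simp add: norm_mult)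
  qed (use f g in measurable)
qed

lemma L2norm_nonneg: "0 \<le> L2norm p f"
  by (simp add: L2norm_def)

lemma L2norm_sq: "(L2norm p f)\<^sup>2 = (LINT x|mu p. (cmod (f x))\<^sup>2)"
  by (simp add: L2norm_def)

lemma L2norm_cmult: "L2norm p (\<lambda>x. c * f x) = cmod c * L2norm p f"
  by (simp add: L2norm_def norm_mult power_mult_distrib real_sqrt_mult)

lemma L2norm_diff_commute: "L2norm p (\<lambda>x. f x - g x) = L2norm p (\<lambda>x. g x - f x)"
  by (simp add: L2norm_def norm_minus_commute)

lemma L2norm_of_norm: "L2norm p (\<lambda>x. complex_of_real (cmod (f x))) = L2norm p f"
  by (simp add: L2norm_def norm_of_real)

lemma L2norm_indicator_le_1: "L2norm p (indicator A :: real \<Rightarrow> complex) \<le> 1"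
proof -
  have "(LINT x|mu p. (cmod (indicator A x :: complex))\<^sup>2) \<le> (LINT x|mu p. 1)"
    by (intro integral_mono') (auto simp: indicator_def)
  then show ?thesis by (simp add: L2norm_def prob_space)
qed

lemma L2norm_phi_le_1: "L2norm p phi \<le> 1"
  unfolding phi_def by (rule L2norm_indicator_le_1)

lemma L2_Cauchy_Schwarz:
  assumes f: "L2 p f" and g: "L2 p g"
  shows "(LINT x|mu p. cmod (f x) * cmod (g x)) \<le> L2norm p f * L2norm p g"
proof -
  have [measurable]: "f \<in> borel_measurable (mu p)" "g \<in> borel_measurable (mu p)"
    using f g by measurable
  have integral: "(\<integral>\<^sup>+x. ennreal (h x) \<partial>mu p) = ennreal (LINT x|mu p. h x)"
    if "integrable (mu p) h" "\<And>x. 0 \<le> h x" for h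
    using that by (intro nn_integral_eq_integral) auto
  have "(\<integral>\<^sup>+x. ennreal (cmod (f x)) * ennreal (cmod (g x)) \<partial>mu p)\<^sup>2
      \<le> (\<integral>\<^sup>+x. ennreal (cmod (f x)) ^ 2 \<partial>mu p) * (\<integral>\<^sup>+x. ennreal (cmod (g x)) ^ 2 \<partial>mu p)"
    by (rule Cauchy_Schwarz_nn_integral) measurable
  then have "ennreal ((LINT x|mu p. cmod (f x) * cmod (g x))\<^sup>2)
      \<le> ennreal ((LINT x|mu p. (cmod (f x))\<^sup>2) * (LINT x|mu p. (cmod (g x))\<^sup>2))"
    using integral[of "\<lambda>x. cmod (f x) * cmod (g x)"] integral[of "\<lambda>x. (cmod (f x))\<^sup>2"]
      integral[of "\<lambda>x. (cmod (g x))\<^sup>2"] integrable_norm[OF integrable_L2_product[OF f g]]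
      L2_integrable_sq[OF f] L2_integrable_sq[OF g]
    by (simp add: norm_mult ennreal_mult'[symmetric] ennreal_power[symmetric] integral_nonneg_AE)
  moreover have "0 \<le> (LINT x|mu p. (cmod (f x))\<^sup>2) * (LINT x|mu p. (cmod (g x))\<^sup>2)"
    by (intro mult_nonneg_nonneg integral_nonneg_AE) auto
  ultimately have "(LINT x|mu p. cmod (f x) * cmod (g x))\<^sup>2 \<le> (L2norm p f * L2norm p g)\<^sup>2"
    unfolding power_mult_distrib L2norm_sq by (rule ennreal_le_iff[THEN iffD1, rotated])
  then show ?thesis
    by (rule power2_le_imp_le) (intro mult_nonneg_nonneg L2norm_nonneg)
qed


lemma norm_inner_mu_le:
  assumes f: "L2 p f" and g: "L2 p g"
  shows "cmod (inner_mu p f g) \<le> L2norm p f * L2norm p g"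
proof -
  have "cmod (inner_mu p f g) \<le> (LINT x|mu p. cmod (cnj (f x) * g x))"
    unfolding inner_mu_def by (rule integral_norm_bound)
  also have "\<dots> \<le> L2norm p f * L2norm p g"
    using L2_Cauchy_Schwarz[OF f g] by (simp add: norm_mult)
  finally show ?thesis .
qed

lemma L2norm_triangle:
  assumes f: "L2 p f" and g: "L2 p g"
  shows "L2norm p (\<lambda>x. f x + g x) \<le> L2norm p f + L2norm p g"
proof -
  have fg: "integrable (mu p) (\<lambda>x. cmod (f x) * cmod (g x))"
    using integrable_norm[OF integrable_L2_product[OF f g]] by (simp add: norm_mult)
  have "(L2norm p (\<lambda>x. f x + g x))\<^sup>2
      \<le> (LINT x|mu p. (cmod (f x))\<^sup>2 + 2 * (cmod (f x) * cmod (g x)) + (cmod (g x))\<^sup>2)"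
    unfolding L2norm_sq
  proof (rule integral_mono)
    show "integrable (mu p) (\<lambda>x. (cmod (f x))\<^sup>2 + 2 * (cmod (f x) * cmod (g x)) + (cmod (g x))\<^sup>2)"
      using L2_integrable_sq[OF f] L2_integrable_sq[OF g] fg by simp
    show "(cmod (f x + g x))\<^sup>2 \<le> (cmod (f x))\<^sup>2 + 2 * (cmod (f x) * cmod (g x)) + (cmod (g x))\<^sup>2" for x
      using power_mono[OF norm_triangle_ineq[of "f x" "g x"] norm_ge_zero, of 2] by (simp add: power2_sum)
  qed (rule L2_integrable_sq[OF L2_add[OF f g]])
  also have "\<dots> = (L2norm p f)\<^sup>2 + 2 * (LINT x|mu p. cmod (f x) * cmod (g x)) + (L2norm p g)\<^sup>2"
    using L2_integrable_sq[OF f] L2_integrable_sq[OF g] fg by (simp add: L2norm_sq)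
  also have "\<dots> \<le> (L2norm p f + L2norm p g)\<^sup>2"
    using L2_Cauchy_Schwarz[OF f g] by (simp add: power2_sum)
  finally show ?thesis
    by (rule power2_le_imp_le) (intro add_nonneg_nonneg L2norm_nonneg)
qed

lemma L2norm_sum_le:
  assumes "finite I" "\<And>i. i \<in> I \<Longrightarrow> L2 p (f i)"
  shows "L2norm p (\<lambda>x. \<Sum>i\<in>I. f i x) \<le> (\<Sum>i\<in>I. L2norm p (f i))"
  using assms
proof (induction I rule: finite_induct)
  case (insert i I)
  then have "L2norm p (\<lambda>x. \<Sum>j\<in>insert i I. f j x) \<le> L2norm p (f i) + L2norm p (\<lambda>x. \<Sum>j\<in>I. f j x)"
    using L2norm_triangle[of "f i" "\<lambda>x. \<Sum>j\<in>I. f j x"] by (simp add: L2_sum)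
  then show ?case using insert by simp
qed (simp add: L2norm_def)

lemma L2norm_eq_0_AE:
  assumes f: "L2 p f" and "L2norm p f = 0"
  shows "AE x in mu p. f x = 0"
proof -
  have "(LINT x|mu p. (cmod (f x))\<^sup>2) = 0"
    using L2norm_sq[of f] assms(2) by simp
  then have "AE x in mu p. (cmod (f x))\<^sup>2 = 0"
    using L2_integrable_sq[OF f] by (subst integral_nonneg_eq_0_iff_AE[symmetric]) auto
  then show ?thesis by simp
qed

lemma AE_eq_0_if_L2norm_le_eps:
  assumes D: "L2 p D" and small: "\<And>e. 0 < e \<Longrightarrow> L2norm p D \<le> e * C"
  shows "AE x in mu p. D x = 0"
proof -
  have "L2norm p D \<le> 0 + e" if e: "0 < e" for e
  proof -
    have "L2norm p D \<le> e / (\<bar>C\<bar> + 1) * C"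
      using e by (intro small) (simp add: add_pos_nonneg)
    also have "\<dots> \<le> e / (\<bar>C\<bar> + 1) * (\<bar>C\<bar> + 1)"
      using e by (intro mult_left_mono) (auto simp: add_pos_nonneg)
    finally show ?thesis by simp
  qed
  then have "L2norm p D = 0"
    using L2norm_nonneg[of D] by (meson antisym field_le_epsilon)
  then show ?thesis by (rule L2norm_eq_0_AE[OF D])
qed

lemma L2norm_cong_AE:
  assumes "AE x in mu p. f x = g x" "f \<in> borel_measurable (mu p)" "g \<in> borel_measurable (mu p)"
  shows "L2norm p f = L2norm p g"
proof -
  have "(LINT x|mu p. (cmod (f x))\<^sup>2) = (LINT x|mu p. (cmod (g x))\<^sup>2)"
    using assms by (intro integral_cong_AE) auto
  then show ?thesis by (simp add: L2norm_def)
qed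

lemma inner_mu_cong_AE:
  assumes "AE x in mu p. g x = h x" "f \<in> borel_measurable (mu p)"
    "g \<in> borel_measurable (mu p)" "h \<in> borel_measurable (mu p)"
  shows "inner_mu p f g = inner_mu p f h"
  unfolding inner_mu_def using assms by (intro integral_cong_AE) auto

lemma inner_mu_linear:
  assumes h: "L2 p h" and f: "L2 p f" and g: "L2 p g"
  shows "inner_mu p h (\<lambda>x. a * f x + b * g x) = a * inner_mu p h f + b * inner_mu p h g"
  using integrable_L2_product[OF h f] integrable_L2_product[OF h g]
  by (simp add: inner_mu_def distrib_left mult.left_commute)

text \<open>Riesz--Fischer for absolutely summable series: the partial sums of \<open>\<Sum> \<bar>h\<^sub>n\<bar>\<close> are bounded
  in \<open>L\<^sup>2\<close> by \<open>\<Sum> \<parallel>h\<^sub>n\<parallel>\<close>, so by monotone convergence \<open>\<Sum> \<bar>h\<^sub>n\<bar>\<close> is square integrable; it then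
  dominates the tails of \<open>\<Sum> h\<^sub>n\<close>.\<close>

lemma nn_integral_SUP_partial_sums_sq_le:
  fixes h :: "nat \<Rightarrow> real \<Rightarrow> complex"
  assumes h: "\<And>n. L2 p (h n)" and summable: "summable (\<lambda>n. L2norm p (h n))"
  shows "(\<integral>\<^sup>+x. (SUP N. ennreal ((\<Sum>n<N. cmod (h n x))\<^sup>2)) \<partial>mu p) \<le> ennreal ((\<Sum>n. L2norm p (h n))\<^sup>2)"
proof -
  have [measurable]: "h n \<in> borel_measurable (mu p)" for n
    using h by measurable
  define A where "A = (\<Sum>n. L2norm p (h n))"
  define G where "G N x = (\<Sum>n<N. cmod (h n x))" for N x
  have [measurable]: "G N \<in> borel_measurable (mu p)" for N
    unfolding G_def by measurable
  have G_nonneg: "0 \<le> G N x" for N x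
    unfolding G_def by (simp add: sum_nonneg)
  have G_mono: "G N x \<le> G M x" if "N \<le> M" for N M x
    unfolding G_def using that by (intro sum_mono2) auto
  have L2_G: "L2 p (\<lambda>x. complex_of_real (G N x))" for N
    unfolding G_def of_real_sum by (intro L2_sum L2_of_norm h) auto
  have "L2norm p (\<lambda>x. complex_of_real (G N x)) \<le> (\<Sum>n<N. L2norm p (h n))" for N
    using L2norm_sum_le[of "{..<N}" "\<lambda>n x. complex_of_real (cmod (h n x))"]
    by (simp add: G_def of_real_sum L2norm_of_norm L2_of_norm h)
  also have "\<dots> N \<le> A" for N
    unfolding A_def using summable by (intro sum_le_suminf) (auto simp: L2norm_nonneg)
  finally have "(L2norm p (\<lambda>x. complex_of_real (G N x)))\<^sup>2 \<le> A\<^sup>2" for N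
    by (intro power_mono L2norm_nonneg)
  then have "(\<integral>\<^sup>+x. ennreal ((G N x)\<^sup>2) \<partial>mu p) \<le> ennreal (A\<^sup>2)" for N
    using L2_integrable_sq[OF L2_G[of N]]
    by (simp add: L2norm_sq nn_integral_eq_integral norm_of_real)
  then have "(\<integral>\<^sup>+x. (SUP N. ennreal ((G N x)\<^sup>2)) \<partial>mu p) \<le> ennreal (A\<^sup>2)"
    using G_mono G_nonneg
    by (subst nn_integral_monotone_convergence_SUP)
       (auto simp: incseq_def le_fun_def intro!: SUP_least ennreal_leI power_mono)
  then show ?thesis
    by (simp add: G_def A_def)
qed

lemma L2_abs_series:
  fixes h :: "nat \<Rightarrow> real \<Rightarrow> complex"
  assumes h: "\<And>n. L2 p (h n)" and summable: "summable (\<lambda>n. L2norm p (h n))"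
  shows "AE x in mu p. summable (\<lambda>n. cmod (h n x))"
    and "integrable (mu p) (\<lambda>x. (\<Sum>n. cmod (h n x))\<^sup>2)"
proof -
  have [measurable]: "h n \<in> borel_measurable (mu p)" for n
    using h by measurable
  define G where "G N x = (\<Sum>n<N. cmod (h n x))" for N x
  have finite: "(\<integral>\<^sup>+x. (SUP N. ennreal ((G N x)\<^sup>2)) \<partial>mu p) \<noteq> \<infinity>"
    using nn_integral_SUP_partial_sums_sq_le[OF h summable] by (auto simp: G_def top_unique)
  have "AE x in mu p. (SUP N. ennreal ((G N x)\<^sup>2)) \<noteq> \<infinity>"
    by (intro nn_integral_noteq_infinite finite) (measurable, simp add: G_def)
  then show summable_AE: "AE x in mu p. summable (\<lambda>n. cmod (h n x))"
  proof eventually_elim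
    case (elim x)
    then obtain b where b: "(SUP N. ennreal ((G N x)\<^sup>2)) = ennreal b" "0 \<le> b"
      by (cases "SUP N. ennreal ((G N x)\<^sup>2)") (auto simp: top_unique)
    have "(G N x)\<^sup>2 \<le> b" for N
      using SUP_upper[of N UNIV "\<lambda>N. ennreal ((G N x)\<^sup>2)"] b by simp
    then have "G N x \<le> sqrt b" for N
      by (rule real_le_rsqrt)
    then show ?case
      unfolding G_def by (intro summableI_nonneg_bounded[where x="sqrt b"]) auto
  qed
  have "AE x in mu p. ennreal ((\<Sum>n. cmod (h n x))\<^sup>2) \<le> (SUP N. ennreal ((G N x)\<^sup>2))"
    using summable_AE
  proof eventually_elim
    case (elim x)
    then have "(\<lambda>N. ennreal ((G N x)\<^sup>2)) \<longlonglongrightarrow> ennreal ((\<Sum>n. cmod (h n x))\<^sup>2)"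
      unfolding G_def by (intro tendsto_ennrealI tendsto_power summable_LIMSEQ)
    then show ?case
      by (rule LIMSEQ_le_const2) (metis SUP_upper UNIV_I)
  qed
  then have "(\<integral>\<^sup>+x. ennreal ((\<Sum>n. cmod (h n x))\<^sup>2) \<partial>mu p) \<le> (\<integral>\<^sup>+x. (SUP N. ennreal ((G N x)\<^sup>2)) \<partial>mu p)"
    by (rule nn_integral_mono_AE)
  then have "(\<integral>\<^sup>+x. ennreal ((\<Sum>n. cmod (h n x))\<^sup>2) \<partial>mu p) \<noteq> \<infinity>"
    using finite by (auto simp: top_unique)
  then show "integrable (mu p) (\<lambda>x. (\<Sum>n. cmod (h n x))\<^sup>2)"
    by (intro integrableI_bounded) (auto simp: less_top)
qed

lemma L2_suminf:
  fixes h :: "nat \<Rightarrow> real \<Rightarrow> complex"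
  assumes h: "\<And>n. L2 p (h n)" and summable: "summable (\<lambda>n. L2norm p (h n))"
  shows "L2 p (\<lambda>x. \<Sum>n. h n x)"
  unfolding L2_def
proof
  have [measurable]: "h n \<in> borel_measurable (mu p)" for n
    using h by measurable
  show "(\<lambda>x. \<Sum>n. h n x) \<in> borel_measurable (mu p)"
    by measurable
  show "integrable (mu p) (\<lambda>x. (cmod (\<Sum>n. h n x))\<^sup>2)"
    using L2_abs_series(2)[OF h summable]
  proof (rule Bochner_Integration.integrable_bound)
    show "AE x in mu p. norm ((cmod (\<Sum>n. h n x))\<^sup>2) \<le> norm ((\<Sum>n. cmod (h n x))\<^sup>2)"
      using L2_abs_series(1)[OF h summable] by eventually_elim (auto intro!: power_mono summable_norm)
  qed measurable
qed

lemma L2norm_series_tail_tendsto_0: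
  fixes h :: "nat \<Rightarrow> real \<Rightarrow> complex"
  assumes h: "\<And>n. L2 p (h n)" and summable: "summable (\<lambda>n. L2norm p (h n))"
  shows "(\<lambda>N. L2norm p (\<lambda>x. (\<Sum>n. h n x) - (\<Sum>n<N. h n x))) \<longlonglongrightarrow> 0"
proof -
  have [measurable]: "h n \<in> borel_measurable (mu p)" for n
    using h by measurable
  define H where "H x = (\<Sum>n. cmod (h n x))" for x
  note summable_AE = L2_abs_series(1)[OF h summable]
  have "(\<lambda>N. LINT x|mu p. (cmod ((\<Sum>n. h n x) - (\<Sum>n<N. h n x)))\<^sup>2) \<longlonglongrightarrow> (LINT x|mu p. 0)"
  proof (rule integral_dominated_convergence[where w="\<lambda>x. 4 * (H x)\<^sup>2"])
    show "integrable (mu p) (\<lambda>x. 4 * (H x)\<^sup>2)"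
      using L2_abs_series(2)[OF h summable] by (simp add: H_def)
    show "AE x in mu p. (\<lambda>N. (cmod ((\<Sum>n. h n x) - (\<Sum>n<N. h n x)))\<^sup>2) \<longlonglongrightarrow> 0"
      using summable_AE
    proof eventually_elim
      case (elim x)
      have "(\<lambda>N. \<Sum>n<N. h n x) \<longlonglongrightarrow> (\<Sum>n. h n x)"
        by (rule summable_LIMSEQ[OF summable_norm_cancel[OF elim]])
      then have "(\<lambda>N. (cmod ((\<Sum>n. h n x) - (\<Sum>n<N. h n x)))\<^sup>2) \<longlonglongrightarrow> (cmod ((\<Sum>n. h n x) - (\<Sum>n. h n x)))\<^sup>2"
        by (intro tendsto_intros)
      then show ?case by simp
    qed
    show "AE x in mu p. norm ((cmod ((\<Sum>n. h n x) - (\<Sum>n<N. h n x)))\<^sup>2) \<le> 4 * (H x)\<^sup>2" for N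
      using summable_AE
    proof eventually_elim
      case (elim x)
      have "cmod (\<Sum>n<N. h n x) \<le> (\<Sum>n<N. cmod (h n x))"
        by (rule norm_sum)
      also have "\<dots> \<le> H x"
        unfolding H_def using elim by (intro sum_le_suminf) auto
      moreover have "cmod (\<Sum>n. h n x) \<le> H x"
        using elim by (simp add: H_def summable_norm)
      ultimately have "cmod ((\<Sum>n. h n x) - (\<Sum>n<N. h n x)) \<le> 2 * H x"
        using norm_triangle_ineq4[of "\<Sum>n. h n x" "\<Sum>n<N. h n x"] by simp
      then have "(cmod ((\<Sum>n. h n x) - (\<Sum>n<N. h n x)))\<^sup>2 \<le> (2 * H x)\<^sup>2"
        by (intro power_mono) auto
      then show ?case by (simp add: power_mult_distrib)
    qed
  qed (simp, measurable)
  then have "(\<lambda>N. sqrt (LINT x|mu p. (cmod ((\<Sum>n. h n x) - (\<Sum>n<N. h n x)))\<^sup>2)) \<longlonglongrightarrow> sqrt 0"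
    by (intro tendsto_real_sqrt) simp
  then show ?thesis
    by (simp add: L2norm_def)
qed

end

definition words_upto :: "nat \<Rightarrow> nat list set" where
  "words_upto m = (\<Union>n\<le>m. words n)"

lemma finite_words_upto: "finite (words_upto m)"
  by (simp add: words_upto_def finite_words)

lemma Km_eq_sum_words_upto:
  "Km p m f = (\<lambda>x. \<Sum>u\<in>words_upto m. inner_mu p (indicator (Cw u)) f * indicator (Cw u) x)"
  by (simp add: Km_def words_upto_def)

context cantor_measure
begin

lemma L2_Cw: "L2 p (indicator (Cw u) :: real \<Rightarrow> complex)"
  by (rule L2_indicator[OF sets_Cw])

lemma L2_Km: "L2 p (Km p m f)"
  unfolding Km_eq_sum_words_upto
  by (intro L2_sum finite_words_upto L2_cmult[of "indicator (Cw _)", simplified mult.commute] L2_Cw)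

lemma Km_linear:
  assumes "L2 p f" "L2 p g"
  shows "Km p m (\<lambda>x. a * f x + b * g x) x = a * Km p m f x + b * Km p m g x"
  unfolding Km_eq_sum_words_upto using inner_mu_linear[OF L2_Cw assms]
  by (simp add: sum_distrib_left sum.distrib algebra_simps)

lemma L2norm_Km_le:
  assumes f: "L2 p f"
  shows "L2norm p (Km p m f) \<le> card (words_upto m) * L2norm p f"
proof -
  have "L2norm p (Km p m f)
      \<le> (\<Sum>u\<in>words_upto m. L2norm p (\<lambda>x. inner_mu p (indicator (Cw u)) f * indicator (Cw u) x))"
    unfolding Km_eq_sum_words_upto
    by (intro L2norm_sum_le finite_words_upto L2_cmult[of "indicator (Cw _)", simplified mult.commute] L2_Cw)
  also have "\<dots> \<le> (\<Sum>u\<in>words_upto m. L2norm p f)"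
  proof (intro sum_mono)
    fix u
    have "L2norm p (\<lambda>x. inner_mu p (indicator (Cw u)) f * indicator (Cw u) x)
        = cmod (inner_mu p (indicator (Cw u)) f) * L2norm p (indicator (Cw u))"
      by (rule L2norm_cmult)
    also have "\<dots> \<le> (L2norm p (indicator (Cw u)) * L2norm p f) * 1"
      using norm_inner_mu_le[OF L2_Cw f] L2norm_indicator_le_1 by (intro mult_mono) (auto simp: L2norm_nonneg)
    also have "\<dots> \<le> L2norm p f"
      using mult_right_mono[OF L2norm_indicator_le_1 L2norm_nonneg, of "Cw u" f] by simp
    finally show "L2norm p (\<lambda>x. inner_mu p (indicator (Cw u)) f * indicator (Cw u) x) \<le> L2norm p f" .
  qed
  finally show ?thesis by simp
qed

end

locale cantor_kernel = cantor_measure +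
  fixes K :: "(real \<Rightarrow> complex) \<Rightarrow> (real \<Rightarrow> complex)"
  assumes is_Kinf: "is_Kinf p K"
begin

lemma L2_K: "L2 p f \<Longrightarrow> L2 p (K f)"
  using is_Kinf by (simp add: is_Kinf_def)

lemma Km_approx:
  assumes "0 < e"
  obtains N where "\<And>m f. N \<le> m \<Longrightarrow> L2 p f \<Longrightarrow> L2norm p (\<lambda>x. Km p m f x - K f x) \<le> e * L2norm p f"
  using is_Kinf assms unfolding is_Kinf_def by blast

lemma K_bounded: "\<exists>C\<ge>0. \<forall>f. L2 p f \<longrightarrow> L2norm p (K f) \<le> C * L2norm p f"
proof -
  obtain N where N: "\<And>m f. N \<le> m \<Longrightarrow> L2 p f \<Longrightarrow> L2norm p (\<lambda>x. Km p m f x - K f x) \<le> 1 * L2norm p f"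
    using Km_approx[of 1] by auto
  have "L2norm p (K f) \<le> (1 + card (words_upto N)) * L2norm p f" if f: "L2 p f" for f
  proof -
    have "L2norm p (K f) = L2norm p (\<lambda>x. (K f x - Km p N f x) + Km p N f x)"
      by simp
    also have "\<dots> \<le> L2norm p (\<lambda>x. K f x - Km p N f x) + L2norm p (Km p N f)"
      by (intro L2norm_triangle L2_diff L2_K L2_Km f)
    also have "L2norm p (\<lambda>x. K f x - Km p N f x) = L2norm p (\<lambda>x. Km p N f x - K f x)"
      by (rule L2norm_diff_commute)
    also have "\<dots> + L2norm p (Km p N f) \<le> 1 * L2norm p f + card (words_upto N) * L2norm p f"
      using N[OF order.refl f] L2norm_Km_le[OF f, of N] by (rule add_mono)
    finally show ?thesis by (simp add: algebra_simps)
  qed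
  then show ?thesis by (intro exI[of _ "1 + real (card (words_upto N))"]) auto
qed

lemma opnorm_nonneg: "0 \<le> opnorm p K"
  and L2norm_K_le: "L2 p f \<Longrightarrow> L2norm p (K f) \<le> opnorm p K * L2norm p f"
proof -
  define S where "S = {c. 0 \<le> c \<and> (\<forall>f. L2 p f \<longrightarrow> L2norm p (K f) \<le> c * L2norm p f)}"
  have opnorm: "opnorm p K = Inf S"
    by (simp add: opnorm_def S_def)
  obtain C where C: "C \<in> S"
    using K_bounded by (auto simp: S_def)
  then show "0 \<le> opnorm p K"
    unfolding opnorm by (intro cInf_greatest) (auto simp: S_def)
  assume f: "L2 p f"
  show "L2norm p (K f) \<le> opnorm p K * L2norm p f"
  proof (cases "L2norm p f = 0")
    case True
    then show ?thesis using C f by (auto simp: S_def)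
  next
    case False
    then have pos: "0 < L2norm p f"
      using L2norm_nonneg[of f] by simp
    have "L2norm p (K f) / L2norm p f \<le> Inf S"
      using C f pos by (intro cInf_greatest) (auto simp: S_def divide_le_eq)
    then show ?thesis
      using pos unfolding opnorm by (simp add: divide_le_eq mult.commute)
  qed
qed

text \<open>\<open>is_Kinf\<close> does not ask \<open>K\<close> to be linear; linearity up to null sets is inherited from the
  \<open>K\<^sub>m\<close> through the operator norm limit.\<close>

lemma K_linear_AE:
  assumes f: "L2 p f" and g: "L2 p g"
  shows "AE x in mu p. K (\<lambda>x. a * f x + b * g x) x = a * K f x + b * K g x"
proof -
  define h where "h = (\<lambda>x. a * f x + b * g x)"
  have h: "L2 p h"
    unfolding h_def by (intro L2_add L2_cmult f g)
  define D where "D = (\<lambda>x. K h x - (a * K f x + b * K g x))"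
  have "AE x in mu p. D x = 0"
  proof (rule AE_eq_0_if_L2norm_le_eps)
    show "L2 p D"
      unfolding D_def by (intro L2_diff L2_add L2_cmult L2_K f g h)
    fix e :: real assume "0 < e"
    then obtain N where N: "\<And>m f. N \<le> m \<Longrightarrow> L2 p f \<Longrightarrow> L2norm p (\<lambda>x. Km p m f x - K f x) \<le> e * L2norm p f"
      using Km_approx by blast
    have D_eq: "D = (\<lambda>x. (K h x - Km p N h x) + (a * (Km p N f x - K f x) + b * (Km p N g x - K g x)))"
      unfolding D_def h_def using Km_linear[OF f g] by (auto simp: algebra_simps)
    have "L2norm p D \<le> L2norm p (\<lambda>x. K h x - Km p N h x)
        + (L2norm p (\<lambda>x. a * (Km p N f x - K f x)) + L2norm p (\<lambda>x. b * (Km p N g x - K g x)))"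
      unfolding D_eq
      by (intro order.trans[OF L2norm_triangle] add_left_mono L2norm_triangle L2_add L2_diff L2_cmult L2_K L2_Km f g h)
    also have "\<dots> \<le> e * L2norm p h + (cmod a * (e * L2norm p f) + cmod b * (e * L2norm p g))"
      unfolding L2norm_cmult L2norm_diff_commute[of "K h"]
      using N[OF order.refl h] N[OF order.refl f] N[OF order.refl g] by (intro add_mono mult_left_mono) auto
    finally show "L2norm p D \<le> e * (L2norm p h + cmod a * L2norm p f + cmod b * L2norm p g)"
      by (simp add: algebra_simps)
  qed
  then show ?thesis by eventually_elim (simp add: D_def h_def)
qed

lemma K_cmult_AE: "L2 p f \<Longrightarrow> AE x in mu p. K (\<lambda>x. c * f x) x = c * K f x"
  using K_linear_AE[of f f c 0] by simp

lemma K_diff_AE: "L2 p f \<Longrightarrow> L2 p g \<Longrightarrow> AE x in mu p. K (\<lambda>x. f x - g x) x = K f x - K g x"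
  using K_linear_AE[of f g 1 "-1"] by simp

end

section \<open>The resolvent applied to \<open>\<phi>\<close>\<close>

context cantor_kernel
begin

definition resolves :: "complex \<Rightarrow> (real \<Rightarrow> complex) \<Rightarrow> bool" where
  "resolves w g \<longleftrightarrow> L2 p g \<and> (AE x in mu p. w * g x - K g x = phi x)"

lemma L2norm_resolves_le:
  assumes w: "opnorm p K < cmod w" and g: "resolves w g"
  shows "L2norm p g \<le> 1 / (cmod w - opnorm p K)"
proof -
  have L2_g: "L2 p g" and "AE x in mu p. w * g x = phi x + K g x"
    using g by (auto simp: resolves_def algebra_simps)
  then have "L2norm p (\<lambda>x. w * g x) = L2norm p (\<lambda>x. phi x + K g x)"
    by (intro L2norm_cong_AE) (use L2_g L2_phi L2_K in measurable)
  also have "\<dots> \<le> 1 + opnorm p K * L2norm p g"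
    using L2norm_triangle[OF L2_phi L2_K[OF L2_g]] L2norm_phi_le_1 L2norm_K_le[OF L2_g] by linarith
  finally have "(cmod w - opnorm p K) * L2norm p g \<le> 1"
    by (simp add: L2norm_cmult algebra_simps)
  then show ?thesis
    using w by (simp add: pos_le_divide_eq mult.commute)
qed

lemma resolves_unique_AE:
  assumes w: "opnorm p K < cmod w" and g1: "resolves w g1" and g2: "resolves w g2"
  shows "AE x in mu p. g1 x = g2 x"
proof -
  have L2: "L2 p g1" "L2 p g2"
    and eq: "AE x in mu p. w * g1 x - K g1 x = phi x" "AE x in mu p. w * g2 x - K g2 x = phi x"
    using g1 g2 by (auto simp: resolves_def)
  define d where "d = (\<lambda>x. g1 x - g2 x)"
  have d: "L2 p d"
    unfolding d_def by (intro L2_diff L2)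
  have "AE x in mu p. w * d x = K d x"
    using eq K_diff_AE[OF L2] by eventually_elim (auto simp: d_def algebra_simps)
  then have "L2norm p (\<lambda>x. w * d x) = L2norm p (K d)"
    by (intro L2norm_cong_AE) (use d L2_K in measurable)
  then have "cmod w * L2norm p d \<le> opnorm p K * L2norm p d"
    using L2norm_K_le[OF d] by (simp add: L2norm_cmult)
  then have "(cmod w - opnorm p K) * L2norm p d \<le> 0"
    by (simp add: algebra_simps)
  then have "L2norm p d = 0"
    using w L2norm_nonneg[of d] by (simp add: mult_le_0_iff)
  then have "AE x in mu p. d x = 0"
    by (rule L2norm_eq_0_AE[OF d])
  then show ?thesis
    by eventually_elim (simp add: d_def)
qed

lemma mfun_eq_inner_mu:
  assumes w: "opnorm p K < cmod w" and g: "resolves w g"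
  shows "mfun p K w = inner_mu p phi g"
  unfolding mfun_def
proof (rule the_equality)
  show "\<exists>g'. L2 p g' \<and> (AE x in mu p. w * g' x - K g' x = phi x) \<and> inner_mu p phi g = inner_mu p phi g'"
    using g by (auto simp: resolves_def)
  fix c assume "\<exists>g'. L2 p g' \<and> (AE x in mu p. w * g' x - K g' x = phi x) \<and> c = inner_mu p phi g'"
  then obtain g' where g': "resolves w g'" and c: "c = inner_mu p phi g'"
    by (auto simp: resolves_def)
  have "inner_mu p phi g' = inner_mu p phi g"
    using resolves_unique_AE[OF w g' g] g g' L2_phi
    by (intro inner_mu_cong_AE) (auto simp: resolves_def)
  then show "c = inner_mu p phi g"
    using c by simp
qed

lemma norm_mfun_le:
  assumes w: "opnorm p K < cmod w" and g: "resolves w g"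
  shows "cmod (mfun p K w) \<le> 1 / (cmod w - opnorm p K)"
proof -
  have "cmod (mfun p K w) \<le> L2norm p phi * L2norm p g"
    unfolding mfun_eq_inner_mu[OF w g] using g by (intro norm_inner_mu_le L2_phi) (simp add: resolves_def)
  also have "\<dots> \<le> L2norm p g"
    using mult_right_mono[OF L2norm_phi_le_1 L2norm_nonneg] by simp
  finally show ?thesis
    using L2norm_resolves_le[OF w g] by simp
qed

lemma L2_K_power_phi: "L2 p ((K ^^ n) phi)"
  by (induction n) (simp_all add: L2_phi L2_K)

lemma L2norm_K_power_phi_le: "L2norm p ((K ^^ n) phi) \<le> opnorm p K ^ n"
proof (induction n)
  case (Suc n)
  then show ?case
    using L2norm_K_le[OF L2_K_power_phi[of n]] opnorm_nonneg
    by (simp add: order.trans[OF _ mult_left_mono])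
qed (simp add: L2norm_phi_le_1)

definition neumann_term :: "complex \<Rightarrow> nat \<Rightarrow> real \<Rightarrow> complex" where
  "neumann_term w n x = (K ^^ n) phi x / w ^ Suc n"

lemma L2_neumann_term: "L2 p (neumann_term w n)"
  using L2_cmult[OF L2_K_power_phi, of "1 / w ^ Suc n" n] by (simp add: neumann_term_def[abs_def])

lemma summable_L2norm_neumann_term:
  assumes w: "opnorm p K < cmod w"
  shows "summable (\<lambda>n. L2norm p (neumann_term w n))"
proof -
  have "L2norm p (neumann_term w n) = L2norm p ((K ^^ n) phi) / cmod w ^ Suc n" for n
    using L2norm_cmult[of "1 / w ^ Suc n" "(K ^^ n) phi"]
    by (simp add: neumann_term_def[abs_def] norm_divide norm_mult norm_power)
  also have "\<dots> n \<le> (1 / cmod w) * (opnorm p K / cmod w) ^ n" for n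
    using L2norm_K_power_phi_le[of n] by (simp add: power_divide divide_right_mono)
  finally have norm_le: "norm (L2norm p (neumann_term w n)) \<le> (1 / cmod w) * (opnorm p K / cmod w) ^ n" for n
    by (simp only: real_norm_def abs_of_nonneg[OF L2norm_nonneg])
  have "summable (\<lambda>n. (1 / cmod w) * (opnorm p K / cmod w) ^ n)"
    using w opnorm_nonneg by (intro summable_mult summable_geometric) (simp add: divide_less_eq)
  then show ?thesis
    by (rule summable_comparison_test') (rule norm_le)
qed

lemma K_neumann_partial_sum:
  assumes w: "w \<noteq> 0"
  shows "AE x in mu p. K (\<lambda>x. \<Sum>n<N. neumann_term w n x) x = w * (\<Sum>n<Suc N. neumann_term w n x) - phi x"
proof (induction N)
  case 0
  have "AE x in mu p. K (\<lambda>x. 0 * phi x) x = 0 * K phi x"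
    by (rule K_cmult_AE[OF L2_phi])
  then show ?case
    using w by (simp add: neumann_term_def)
next
  case (Suc N)
  have L2_S: "L2 p (\<lambda>x. \<Sum>n<N. neumann_term w n x)"
    by (intro L2_sum L2_neumann_term) auto
  have "(\<lambda>x. \<Sum>n<Suc N. neumann_term w n x) = (\<lambda>x. 1 * (\<Sum>n<N. neumann_term w n x) + 1 / w ^ Suc N * (K ^^ N) phi x)"
    by (simp add: neumann_term_def)
  then have "AE x in mu p. K (\<lambda>x. \<Sum>n<Suc N. neumann_term w n x) x
      = K (\<lambda>x. \<Sum>n<N. neumann_term w n x) x + 1 / w ^ Suc N * (K ^^ Suc N) phi x"
    using K_linear_AE[OF L2_S L2_K_power_phi[of N], of 1 "1 / w ^ Suc N"] by simp
  then show ?case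
    using Suc
  proof eventually_elim
    case (elim x)
    have "w * neumann_term w (Suc N) x = 1 / w ^ Suc N * (K ^^ Suc N) phi x"
      using w by (simp add: neumann_term_def field_simps)
    then show ?case
      using elim by (simp add: distrib_left)
  qed
qed

lemma L2norm_residual_le:
  assumes g: "L2 p g" and f: "L2 p f" and f': "L2 p f'"
    and Kf: "AE x in mu p. K f x = w * f' x - phi x"
  shows "L2norm p (\<lambda>x. w * g x - K g x - phi x)
    \<le> cmod w * L2norm p (\<lambda>x. g x - f' x) + opnorm p K * L2norm p (\<lambda>x. g x - f x)"
proof -
  have L2_diff_f: "L2 p (\<lambda>x. f x - g x)"
    by (intro L2_diff f g)
  have "AE x in mu p. w * g x - K g x - phi x = w * (g x - f' x) + K (\<lambda>x. f x - g x) x"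
    using Kf K_diff_AE[OF f g] by eventually_elim (simp add: algebra_simps)
  then have "L2norm p (\<lambda>x. w * g x - K g x - phi x) = L2norm p (\<lambda>x. w * (g x - f' x) + K (\<lambda>x. f x - g x) x)"
    by (intro L2norm_cong_AE) (use g f' L2_phi L2_K[OF g] L2_K[OF L2_diff_f] in measurable)
  also have "\<dots> \<le> L2norm p (\<lambda>x. w * (g x - f' x)) + L2norm p (K (\<lambda>x. f x - g x))"
    by (intro L2norm_triangle L2_cmult L2_diff g f' L2_K L2_diff_f)
  also have "\<dots> \<le> cmod w * L2norm p (\<lambda>x. g x - f' x) + opnorm p K * L2norm p (\<lambda>x. f x - g x)"
    unfolding L2norm_cmult by (intro add_left_mono L2norm_K_le L2_diff_f)
  finally show ?thesis
    by (simp only: L2norm_diff_commute[of f g])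
qed

text \<open>For \<open>\<parallel>K\<parallel> < |w|\<close> the Neumann series \<open>\<Sum> K\<^sup>n \<phi> / w\<^sup>n\<^sup>+\<^sup>1\<close> converges in \<open>L\<^sup>2\<close>, and its partial sums
  \<open>S\<^sub>N\<close> satisfy \<open>K S\<^sub>N = w S\<^sub>N\<^sub>+\<^sub>1 - \<phi>\<close>, so the residual of its sum is squeezed to 0.\<close>

lemma resolves_exists:
  assumes w: "opnorm p K < cmod w"
  obtains g where "resolves w g"
proof -
  have w0: "w \<noteq> 0"
    using w opnorm_nonneg by auto
  note summable = summable_L2norm_neumann_term[OF w]
  define g where "g x = (\<Sum>n. neumann_term w n x)" for x
  define S where "S = (\<lambda>N x. \<Sum>n<N. neumann_term w n x)"
  have L2_g: "L2 p g"
    unfolding g_def by (rule L2_suminf[OF L2_neumann_term summable])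
  have L2_S: "L2 p (S N)" for N
    unfolding S_def by (intro L2_sum L2_neumann_term) auto
  have K_S: "AE x in mu p. K (S N) x = w * S (Suc N) x - phi x" for N
    unfolding S_def by (rule K_neumann_partial_sum[OF w0])
  define R where "R x = w * g x - K g x - phi x" for x
  have L2_R: "L2 p R"
    unfolding R_def by (intro L2_diff L2_cmult L2_g L2_K L2_phi)
  have "(\<lambda>N. L2norm p (\<lambda>x. g x - S N x)) \<longlonglongrightarrow> 0"
    unfolding g_def S_def by (rule L2norm_series_tail_tendsto_0[OF L2_neumann_term summable])
  then have "(\<lambda>N. cmod w * L2norm p (\<lambda>x. g x - S (Suc N) x) + opnorm p K * L2norm p (\<lambda>x. g x - S N x))
      \<longlonglongrightarrow> cmod w * 0 + opnorm p K * 0"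
    by (intro tendsto_intros LIMSEQ_Suc)
  moreover have "L2norm p R \<le> cmod w * L2norm p (\<lambda>x. g x - S (Suc N) x) + opnorm p K * L2norm p (\<lambda>x. g x - S N x)" for N
    unfolding R_def by (rule L2norm_residual_le[OF L2_g L2_S L2_S K_S])
  ultimately have "L2norm p R \<le> 0"
    by (intro LIMSEQ_le_const) auto
  then have "AE x in mu p. R x = 0"
    using L2norm_nonneg[of R] by (intro L2norm_eq_0_AE[OF L2_R]) simp
  then have "resolves w g"
    unfolding resolves_def using L2_g by (auto elim!: eventually_mono simp: R_def)
  then show ?thesis ..
qed

end

section \<open>Transport to the first-level pieces \<open>C\<^sub>0\<close> and \<open>C\<^sub>2\<close>\<close>

text \<open>\<open>Sl_inv i\<close> inverts \<open>S\<^sub>i\<close> on \<open>[0,1]\<close>; it is clamped to map \<open>[0,1]\<close> into itself, which makes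
  it measurable from \<open>\<mu>\<^sub>p\<close> to \<open>\<mu>\<^sub>p\<close>.\<close>

definition Sl_inv :: "nat \<Rightarrow> real \<Rightarrow> real" where
  "Sl_inv i x = (if i = 0 then min 1 (3 * x) else max 0 (3 * x - 2))"

definition lift :: "nat \<Rightarrow> (real \<Rightarrow> complex) \<Rightarrow> real \<Rightarrow> complex" where
  "lift i g x = indicator (Cw [i]) x * g (Sl_inv i x)"

lemma Sl_inv_Sl: "i \<in> {0, 2} \<Longrightarrow> y \<in> {0..1} \<Longrightarrow> Sl_inv i (Sl i y) = y"
  by (auto simp: Sl_inv_def Sl_def S0_def S2_def add_divide_distrib)

lemma Sl_inj: "i \<in> {0, 2} \<Longrightarrow> Sl i x = Sl i y \<Longrightarrow> x = y"
  by (auto simp: Sl_def S0_def S2_def)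

lemma Cw_0_subset: "Cw [0] \<subseteq> {0..1/3}"
  using Cantor_subset by (auto simp: Cw_Cons Cw_Nil Sl_def S0_def)

lemma Cw_2_subset: "Cw [2] \<subseteq> {2/3..1}"
  using Cantor_subset by (auto simp: Cw_Cons Cw_Nil Sl_def S2_def)

lemma Sl_notin_Cw_other:
  assumes "i \<in> {0, 2}" "j \<in> {0, 2}" "j \<noteq> i" "y \<in> {0..1}"
  shows "Sl j y \<notin> Cw (i # v)"
proof
  assume "Sl j y \<in> Cw (i # v)"
  then have "Sl j y \<in> Cw [i]"
    using Cw_subset_Cantor[of v] by (auto simp: Cw_Cons Cw_Nil)
  then show False
    using assms Cw_0_subset Cw_2_subset by (auto simp: Sl_def S0_def S2_def)
qed

lemma Sl_in_Cw_Cons_iff: "y \<in> Cantor \<Longrightarrow> Sl i y \<in> Cw (i # v) \<longleftrightarrow> y \<in> Cw v"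
  by (auto simp: Cw_Cons Sl_def S0_def S2_def)

lemma Sl_inv_in_Cantor: "i \<in> {0, 2} \<Longrightarrow> x \<in> Cw [i] \<Longrightarrow> Sl_inv i x \<in> Cantor"
  using Sl_inv_Sl Cantor_subset by (auto simp: Cw_Cons Cw_Nil)

lemma indicator_Cw_Cons:
  assumes i: "i \<in> {0, 2}"
  shows "indicator (Cw (i # v)) x = (indicator (Cw [i]) x * indicator (Cw v) (Sl_inv i x) :: complex)"
proof -
  have "x \<in> Cw (i # v) \<longleftrightarrow> x \<in> Cw [i] \<and> Sl_inv i x \<in> Cw v"
    using Sl_inv_Sl[OF i] Cw_subset_Cantor[of v] Cantor_subset by (force simp: Cw_Cons Cw_Nil)
  then show ?thesis by (simp add: indicator_def)
qed

lemma indicator_Cw_Sl: "i \<in> {0, 2} \<Longrightarrow> indicator (Cw [i]) (Sl i y) = (indicator Cantor y :: complex)"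
  using Sl_inj by (auto simp: Cw_Cons Cw_Nil indicator_def)

lemma lift_Sl: "i \<in> {0, 2} \<Longrightarrow> y \<in> {0..1} \<Longrightarrow> lift i h (Sl i y) = indicator Cantor y * h y"
  by (simp add: lift_def indicator_Cw_Sl Sl_inv_Sl)

lemma indicator_Cantor_split: "indicator Cantor x = (indicator (Cw [0]) x + indicator (Cw [2]) x :: complex)"
proof -
  have "Cantor = Cw [0] \<union> Cw [2]"
    using Cantor_self_similar by (simp add: Cw_Cons Cw_Nil Sl_def)
  moreover have "Cw [0] \<inter> Cw [2] = {}"
    using Cw_0_subset Cw_2_subset by fastforce
  ultimately show ?thesis
    by (auto simp: indicator_def)
qed

lemma sum_words_upto_Suc:
  "(\<Sum>u\<in>words_upto (Suc m). F u) = F [] + (\<Sum>v\<in>words_upto m. F (0 # v)) + (\<Sum>v\<in>words_upto m. F (2 # v))"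
proof -
  have words_upto_Suc:
    "words_upto (Suc m) = insert [] ((\<lambda>v. 0 # v) ` words_upto m \<union> (\<lambda>v. 2 # v) ` words_upto m)"
    unfolding words_upto_def atMost_Suc_eq_insert_0 by (auto simp: words_Suc words_0)
  have "(\<Sum>u\<in>words_upto (Suc m). F u)
      = F [] + (\<Sum>u\<in>(\<lambda>v. 0 # v) ` words_upto m \<union> (\<lambda>v. 2 # v) ` words_upto m. F u)"
    unfolding words_upto_Suc using finite_words_upto[of m] by (subst sum.insert) auto
  also have "\<dots> = F [] + ((\<Sum>u\<in>(\<lambda>v. 0 # v) ` words_upto m. F u) + (\<Sum>u\<in>(\<lambda>v. 2 # v) ` words_upto m. F u))"
    using finite_words_upto[of m] by (subst sum.union_disjoint) auto
  also have "\<dots> = F [] + ((\<Sum>v\<in>words_upto m. F (0 # v)) + (\<Sum>v\<in>words_upto m. F (2 # v)))"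
    by (simp add: sum.reindex)
  finally show ?thesis
    by (simp add: add.assoc)
qed

context cantor_measure
begin

definition weight :: "nat \<Rightarrow> real" where
  "weight i = (if i = 0 then p else 1 - p)"

lemma weight_bounds: "0 < weight i" "weight i \<le> 1"
  using p_pos p_less_1 by (auto simp: weight_def)

lemma measurable_Sl_inv: "Sl_inv i \<in> measurable (mu p) (mu p)"
proof (intro measurable_mu_mu measurable_unit_borel)
  show "Sl_inv i \<in> borel_measurable borel"
    unfolding Sl_inv_def by measurable
qed (auto simp: Sl_inv_def)

lemma measurable_lift [measurable]:
  assumes "g \<in> borel_measurable (mu p)"
  shows "lift i g \<in> borel_measurable (mu p)"
proof -
  have "(indicator (Cw [i]) :: real \<Rightarrow> complex) \<in> borel_measurable (mu p)"
    by (intro measurable_mu borel_measurable_indicator sets_Cw)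
  then show ?thesis
    unfolding lift_def using measurable_compose[OF measurable_Sl_inv assms] by (rule borel_measurable_times)
qed

lemma nn_integral_supported_Cw:
  fixes F :: "real \<Rightarrow> ennreal"
  assumes i: "i \<in> {0, 2}" and F: "F \<in> borel_measurable (mu p)"
    and supp: "\<And>x. x \<notin> Cw [i] \<Longrightarrow> F x = 0"
  shows "(\<integral>\<^sup>+x. F x \<partial>mu p) = weight i * (\<integral>\<^sup>+y. F (Sl i y) \<partial>mu p)"
proof -
  have "(\<integral>\<^sup>+y. F (Sl j y) \<partial>mu p) = 0" if "j \<in> {0, 2}" "j \<noteq> i" for j
    using Sl_notin_Cw_other[OF i that, of _ "[]"] supp
    by (subst nn_integral_cong[where v="\<lambda>_. 0"]) (auto simp: space_mu)
  then show ?thesis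
    using nn_integral_self_similar[OF F] i by (auto simp: weight_def Sl_def)
qed

lemma integral_supported_Cw:
  fixes F :: "real \<Rightarrow> complex"
  assumes i: "i \<in> {0, 2}" and F: "integrable (mu p) F"
    and supp: "\<And>x. x \<notin> Cw [i] \<Longrightarrow> F x = 0"
  shows "integral\<^sup>L (mu p) F = weight i * integral\<^sup>L (mu p) (\<lambda>y. F (Sl i y))"
proof -
  have "integral\<^sup>L (mu p) (\<lambda>y. F (Sl j y)) = 0" if "j \<in> {0, 2}" "j \<noteq> i" for j
    using Sl_notin_Cw_other[OF i that, of _ "[]"] supp
    by (subst Bochner_Integration.integral_cong[where g="\<lambda>_. 0"]) (auto simp: space_mu)
  then show ?thesis
    using integral_self_similar[OF F] i by (auto simp: weight_def Sl_def)
qed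

lemma AE_lift:
  assumes i: "i \<in> {0, 2}" and P: "AE y in mu p. P y"
  shows "AE x in mu p. x \<in> Cw [i] \<longrightarrow> P (Sl_inv i x)"
proof -
  obtain N where N: "{y \<in> space (mu p). \<not> P y} \<subseteq> N" "N \<in> sets (mu p)" "emeasure (mu p) N = 0"
    using P by (auto elim!: AE_E)
  define N' where "N' = Sl_inv i -` N \<inter> space (mu p) \<inter> Cw [i]"
  have "Cw [i] \<in> sets (mu p)"
    unfolding sets_mu sets_unit_borel_iff using Cw_subset_unit sets_Cw by blast
  then have N': "N' \<in> sets (mu p)"
    unfolding N'_def by (intro sets.Int measurable_sets[OF measurable_Sl_inv N(2)])
  have "emeasure (mu p) N' = (\<integral>\<^sup>+x. indicator N' x \<partial>mu p)"
    using N' by simp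
  also have "\<dots> = weight i * (\<integral>\<^sup>+y. indicator N' (Sl i y) \<partial>mu p)"
    using N' by (intro nn_integral_supported_Cw i) (auto simp: N'_def)
  also have "\<dots> \<le> weight i * (\<integral>\<^sup>+y. indicator N y \<partial>mu p)"
    using Sl_inv_Sl[OF i]
    by (intro mult_left_mono nn_integral_mono) (auto simp: N'_def space_mu split: split_indicator)
  also have "\<dots> = 0"
    using N by simp
  finally have "N' \<in> null_sets (mu p)"
    using N' by (simp add: null_sets_def)
  moreover have "{x \<in> space (mu p). \<not> (x \<in> Cw [i] \<longrightarrow> P (Sl_inv i x))} \<subseteq> N'"
    using N(1) measurable_space[OF measurable_Sl_inv] by (auto simp: N'_def)
  ultimately show ?thesis
    by (rule AE_I')
qed

lemma nn_integral_lift_le: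
  assumes i: "i \<in> {0, 2}" and [measurable]: "h \<in> borel_measurable (mu p)"
  shows "(\<integral>\<^sup>+x. ennreal ((cmod (lift i h x))\<^sup>2) \<partial>mu p) \<le> (\<integral>\<^sup>+y. ennreal ((cmod (h y))\<^sup>2) \<partial>mu p)"
proof -
  have "(\<integral>\<^sup>+x. ennreal ((cmod (lift i h x))\<^sup>2) \<partial>mu p)
      = weight i * (\<integral>\<^sup>+y. ennreal ((cmod (lift i h (Sl i y)))\<^sup>2) \<partial>mu p)"
    by (rule nn_integral_supported_Cw[OF i]) (measurable, simp add: lift_def)
  also have "\<dots> \<le> 1 * (\<integral>\<^sup>+y. ennreal ((cmod (h y))\<^sup>2) \<partial>mu p)"
    using weight_bounds lift_Sl[OF i]
    by (intro mult_mono nn_integral_mono) (auto simp: space_mu indicator_def intro!: ennreal_leI)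
  finally show ?thesis by simp
qed

lemma L2_lift:
  assumes i: "i \<in> {0, 2}" and h: "L2 p h"
  shows "L2 p (lift i h)"
proof -
  have [measurable]: "h \<in> borel_measurable (mu p)"
    using h by measurable
  have "(\<integral>\<^sup>+x. ennreal ((cmod (lift i h x))\<^sup>2) \<partial>mu p) < \<infinity>"
    using le_less_trans[OF nn_integral_lift_le[OF i]] L2_integrable_sq[OF h]
    by (simp add: integrable_iff_bounded)
  then show ?thesis
    unfolding L2_def by (auto simp: integrable_iff_bounded)
qed

lemma L2norm_lift_le:
  assumes i: "i \<in> {0, 2}" and h: "L2 p h"
  shows "L2norm p (lift i h) \<le> L2norm p h"
proof -
  have [measurable]: "h \<in> borel_measurable (mu p)"
    using h by measurable
  have "(LINT x|mu p. (cmod (lift i h x))\<^sup>2) \<le> (LINT y|mu p. (cmod (h y))\<^sup>2)"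
    using nn_integral_lift_le[OF i] L2_integrable_sq[OF h]
    by (simp add: integral_eq_nn_integral integrable_iff_bounded enn2real_mono less_top)
  then show ?thesis
    unfolding L2norm_def by (rule real_sqrt_le_mono)
qed

lemma inner_mu_indicator_lift:
  assumes i: "i \<in> {0, 2}" and A: "A \<in> sets borel" and B: "B \<in> sets borel" "B \<subseteq> Cantor"
    and AB: "\<And>y. y \<in> Cantor \<Longrightarrow> Sl i y \<in> A \<longleftrightarrow> y \<in> B" and g: "L2 p g"
  shows "inner_mu p (indicator A) (lift i g) = weight i * inner_mu p (indicator B) g"
proof -
  have "inner_mu p (indicator A) (lift i g)
      = weight i * (LINT y|mu p. cnj (indicator A (Sl i y)) * lift i g (Sl i y))"
    unfolding inner_mu_def
    by (rule integral_supported_Cw[OF i integrable_L2_product[OF L2_indicator[OF A] L2_lift[OF i g]]])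
      (simp add: lift_def)
  also have "(LINT y|mu p. cnj (indicator A (Sl i y)) * lift i g (Sl i y)) = inner_mu p (indicator B) g"
    unfolding inner_mu_def
    using AB B(2) lift_Sl[OF i] by (intro Bochner_Integration.integral_cong) (auto simp: space_mu indicator_def)
  finally show ?thesis .
qed

lemma inner_mu_indicator_lift_other:
  assumes "i \<in> {0, 2}" "j \<in> {0, 2}" "j \<noteq> i"
  shows "inner_mu p (indicator (Cw (j # v))) (lift i g) = 0"
proof -
  have "cnj (indicator (Cw (j # v)) x) * lift i g x = 0" for x
  proof (cases "x \<in> Cw (j # v)")
    case True
    then obtain y where "y \<in> Cw v" "x = Sl j y"
      by (auto simp: Cw_Cons)
    then have "x \<notin> Cw [i]"
      using Sl_notin_Cw_other[OF assms, of y "[]"] Cw_subset_unit[of v] by auto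
    then show ?thesis
      by (simp add: lift_def)
  qed simp
  then have "(\<lambda>x. cnj (indicator (Cw (j # v)) x) * lift i g x) = (\<lambda>x. 0)"
    by (rule ext)
  then show ?thesis
    unfolding inner_mu_def by simp
qed

lemma inner_mu_phi_lift:
  assumes i: "i \<in> {0, 2}" and g: "L2 p g"
  shows "inner_mu p phi (lift i g) = weight i * inner_mu p phi g"
  unfolding phi_def using Sl_in_Cantor
  by (intro inner_mu_indicator_lift i sets_Cantor g) auto

text \<open>Among the words of length \<open>\<le> m + 1\<close>, only the empty word and the words starting with \<open>i\<close> see
  a function supported on \<open>C\<^sub>i\<close>; this is the self-similarity of \<open>K\<^sub>m\<close>.\<close>

lemma Km_Suc_lift:
  assumes i: "i \<in> {0, 2}" and g: "L2 p g"
  shows "Km p (Suc m) (lift i g) x = inner_mu p phi (lift i g) * phi x + weight i * lift i (Km p m g) x"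
proof -
  define T where "T u = inner_mu p (indicator (Cw u)) (lift i g) * indicator (Cw u) x" for u
  have T_Nil: "T [] = inner_mu p phi (lift i g) * phi x"
    by (simp add: T_def Cw_Nil phi_def)
  have "inner_mu p (indicator (Cw (i # v))) (lift i g) = weight i * inner_mu p (indicator (Cw v)) g" for v
    by (rule inner_mu_indicator_lift[OF i sets_Cw sets_Cw Cw_subset_Cantor Sl_in_Cw_Cons_iff g])
  then have "T (i # v) = weight i * (indicator (Cw [i]) x
      * (inner_mu p (indicator (Cw v)) g * indicator (Cw v) (Sl_inv i x)))" for v
    unfolding T_def indicator_Cw_Cons[OF i, of v x] by simp
  then have "(\<Sum>v\<in>words_upto m. T (i # v)) = weight i * lift i (Km p m g) x"
    unfolding lift_def Km_eq_sum_words_upto by (simp add: sum_distrib_left)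
  moreover have "T (j # v) = 0" if "j \<in> {0, 2}" "j \<noteq> i" for j v
    using inner_mu_indicator_lift_other[OF i that] by (simp add: T_def)
  ultimately have "T [] + (\<Sum>v\<in>words_upto m. T (0 # v)) + (\<Sum>v\<in>words_upto m. T (2 # v))
      = inner_mu p phi (lift i g) * phi x + weight i * lift i (Km p m g) x"
    using i T_Nil by auto
  then show ?thesis
    by (simp add: Km_eq_sum_words_upto T_def sum_words_upto_Suc)
qed

end

section \<open>The renewal equation\<close>

lemma one_diff_diff_nonzero:
  fixes a b :: "'a :: real_normed_algebra_1"
  assumes "norm a + norm b < 1"
  shows "1 - a - b \<noteq> 0"
proof
  assume "1 - a - b = 0"
  then have "1 \<le> norm a + norm b"
    using norm_triangle_ineq[of a b] by (simp add: algebra_simps)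
  with assms show False
    by simp
qed

lemma renewal_fraction_identity:
  fixes a b :: "'a :: field"
  assumes "1 - a \<noteq> 0" "1 - a - b \<noteq> 0"
  shows "(a + b) / (1 - a - b) = a / (1 - a) + b / ((1 - a) * (1 - a - b))"
proof -
  obtain d e where a: "a = 1 - d" and b: "b = d - e" and "d \<noteq> 0" "e \<noteq> 0"
    using assms by (intro that[of "1 - a" "1 - a - b"]) auto
  then show ?thesis
    unfolding a b by (simp add: field_simps)
qed

context cantor_kernel
begin

lemma K_lift_AE:
  assumes i: "i \<in> {0, 2}" and g: "L2 p g"
  shows "AE x in mu p. K (lift i g) x = inner_mu p phi (lift i g) * phi x + weight i * lift i (K g) x"
proof -
  have L2_lift_g: "L2 p (lift i g)"
    by (rule L2_lift[OF i g])
  define D where "D x = K (lift i g) x - (inner_mu p phi (lift i g) * phi x + weight i * lift i (K g) x)" for x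
  have "AE x in mu p. D x = 0"
  proof (rule AE_eq_0_if_L2norm_le_eps)
    show "L2 p D"
      unfolding D_def by (intro L2_diff L2_add L2_cmult L2_K L2_lift_g L2_lift i g L2_phi)
    fix e :: real assume "0 < e"
    then obtain N where N: "\<And>m f. N \<le> m \<Longrightarrow> L2 p f \<Longrightarrow> L2norm p (\<lambda>x. Km p m f x - K f x) \<le> e * L2norm p f"
      using Km_approx by blast
    have L2_diff_g: "L2 p (\<lambda>x. Km p N g x - K g x)"
      by (intro L2_diff L2_Km L2_K g)
    have "D = (\<lambda>x. (K (lift i g) x - Km p (Suc N) (lift i g) x) + weight i * lift i (\<lambda>x. Km p N g x - K g x) x)"
      by (auto simp: D_def Km_Suc_lift[OF i g] lift_def algebra_simps)
    then have "L2norm p D \<le> L2norm p (\<lambda>x. K (lift i g) x - Km p (Suc N) (lift i g) x)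
        + L2norm p (\<lambda>x. weight i * lift i (\<lambda>x. Km p N g x - K g x) x)"
      by (simp only:) (intro L2norm_triangle L2_diff L2_K L2_Km L2_lift_g L2_cmult L2_lift[OF i L2_diff_g])
    also have "L2norm p (\<lambda>x. K (lift i g) x - Km p (Suc N) (lift i g) x)
        = L2norm p (\<lambda>x. Km p (Suc N) (lift i g) x - K (lift i g) x)"
      by (rule L2norm_diff_commute)
    also have "\<dots> \<le> e * L2norm p (lift i g)"
      by (rule N[OF _ L2_lift_g]) simp
    also have "L2norm p (\<lambda>x. weight i * lift i (\<lambda>x. Km p N g x - K g x) x)
        = weight i * L2norm p (lift i (\<lambda>x. Km p N g x - K g x))"
      using weight_bounds(1)[of i] by (simp add: L2norm_cmult)
    also have "\<dots> \<le> 1 * L2norm p (\<lambda>x. Km p N g x - K g x)"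
      using weight_bounds L2norm_lift_le[OF i L2_diff_g] by (intro mult_mono L2norm_nonneg) auto
    also have "\<dots> \<le> e * L2norm p g"
      using N[OF order.refl g] by simp
    finally show "L2norm p D \<le> e * (L2norm p (lift i g) + L2norm p g)"
      by (simp add: algebra_simps)
  qed
  then show ?thesis
    by eventually_elim (simp add: D_def)
qed

lemma lift_K_resolves:
  assumes i: "i \<in> {0, 2}" and g: "resolves w g"
  shows "AE x in mu p. lift i (K g) x = w * lift i g x - indicator (Cw [i]) x"
proof -
  have "AE y in mu p. w * g y - K g y = phi y"
    using g by (simp add: resolves_def)
  then have "AE x in mu p. x \<in> Cw [i] \<longrightarrow> w * g (Sl_inv i x) - K g (Sl_inv i x) = phi (Sl_inv i x)"
    by (rule AE_lift[OF i])
  then show ?thesis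
  proof eventually_elim
    case (elim x)
    show ?case
    proof (cases "x \<in> Cw [i]")
      case True
      then show ?thesis
        using elim Sl_inv_in_Cantor[OF i True] by (simp add: lift_def phi_def algebra_simps)
    qed (simp add: lift_def)
  qed
qed

lemma K_lift_resolves:
  fixes z :: complex
  assumes i: "i \<in> {0, 2}" and g: "resolves (z / weight i) g"
  shows "AE x in mu p. K (lift i g) x
    = weight i * (inner_mu p phi g * phi x - indicator (Cw [i]) x) + z * lift i g x"
proof -
  have L2_g: "L2 p g"
    using g by (simp add: resolves_def)
  have weight: "weight i \<noteq> 0"
    using weight_bounds(1)[of i] by simp
  show ?thesis
    using K_lift_AE[OF i L2_g] lift_K_resolves[OF i g]
  proof eventually_elim
    case (elim x)
    then have "K (lift i g) x = weight i * inner_mu p phi g * phi x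
        + weight i * (z / weight i * lift i g x - indicator (Cw [i]) x)"
      by (simp add: inner_mu_phi_lift[OF i L2_g])
    also have "\<dots> = weight i * (inner_mu p phi g * phi x - indicator (Cw [i]) x) + z * lift i g x"
      using weight by (simp add: field_simps)
    finally show ?case .
  qed
qed

lemma lift_combination_AE:
  fixes z c :: complex
  assumes g1: "resolves (z / p) g1" and g2: "resolves (z / (1 - p)) g2"
  defines "H \<equiv> \<lambda>x. c / p * lift 0 g1 x + c / (1 - p) * lift 2 g2 x"
  shows "AE x in mu p. z * H x - K H x = c * (1 - inner_mu p phi g1 - inner_mu p phi g2) * phi x"
proof -
  define P where "P = complex_of_real p"
  define Q where "Q = complex_of_real (1 - p)"
  have PQ: "P \<noteq> 0" "Q \<noteq> 0"
    using p_pos p_less_1 by (simp_all add: P_def Q_def)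
  have L2_lifts: "L2 p (lift 0 g1)" "L2 p (lift 2 g2)"
    using L2_lift[of 0 g1] L2_lift[of 2 g2] g1 g2 by (simp_all add: resolves_def)
  have "AE x in mu p. K (lift 0 g1) x = P * (inner_mu p phi g1 * phi x - indicator (Cw [0]) x) + z * lift 0 g1 x"
    using K_lift_resolves[of 0 z g1] g1 by (simp add: weight_def P_def)
  moreover have "AE x in mu p. K (lift 2 g2) x = Q * (inner_mu p phi g2 * phi x - indicator (Cw [2]) x) + z * lift 2 g2 x"
    using K_lift_resolves[of 2 z g2] g2 by (simp add: weight_def Q_def)
  moreover have "AE x in mu p. K H x = c / P * K (lift 0 g1) x + c / Q * K (lift 2 g2) x"
    unfolding H_def P_def Q_def by (rule K_linear_AE[OF L2_lifts])
  ultimately show ?thesis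
  proof eventually_elim
    case (elim x)
    have "K H x = c / P * (P * (inner_mu p phi g1 * phi x - indicator (Cw [0]) x) + z * lift 0 g1 x)
        + c / Q * (Q * (inner_mu p phi g2 * phi x - indicator (Cw [2]) x) + z * lift 2 g2 x)"
      using elim by simp
    also have "\<dots> = c * (inner_mu p phi g1 + inner_mu p phi g2) * phi x
        - c * (indicator (Cw [0]) x + indicator (Cw [2]) x) + z * H x"
      using PQ by (simp add: H_def P_def Q_def field_simps)
    finally show ?case
      by (simp add: phi_def indicator_Cantor_split algebra_simps)
  qed
qed

lemma mfun_renewal:
  fixes z :: complex
  assumes z: "opnorm p K < cmod z"
    and g1: "resolves (z / p) g1" and g2: "resolves (z / (1 - p)) g2"
    and denom: "1 - inner_mu p phi g1 - inner_mu p phi g2 \<noteq> 0"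
  shows "mfun p K z = (inner_mu p phi g1 + inner_mu p phi g2) / (1 - inner_mu p phi g1 - inner_mu p phi g2)"
proof -
  define u where "u = 1 / (1 - inner_mu p phi g1 - inner_mu p phi g2)"
  define H where "H = (\<lambda>x. u / p * lift 0 g1 x + u / (1 - p) * lift 2 g2 x)"
  have L2: "L2 p g1" "L2 p g2"
    using g1 g2 by (auto simp: resolves_def)
  have L2_lifts: "L2 p (lift 0 g1)" "L2 p (lift 2 g2)"
    using L2_lift[of 0 g1] L2_lift[of 2 g2] L2 by simp_all
  have "AE x in mu p. z * H x - K H x = phi x"
    using lift_combination_AE[OF g1 g2, of u] denom by (simp add: H_def u_def)
  moreover have "L2 p H"
    unfolding H_def by (intro L2_add L2_cmult L2_lifts)
  ultimately have "mfun p K z = inner_mu p phi H"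
    by (intro mfun_eq_inner_mu[OF z]) (simp add: resolves_def)
  also have "\<dots> = u / p * inner_mu p phi (lift 0 g1) + u / (1 - p) * inner_mu p phi (lift 2 g2)"
    unfolding H_def by (rule inner_mu_linear[OF L2_phi L2_lifts])
  also have "\<dots> = u * (inner_mu p phi g1 + inner_mu p phi g2)"
    using p_pos p_less_1 by (simp add: inner_mu_phi_lift L2 weight_def field_simps)
  finally show ?thesis
    by (simp add: u_def)
qed

lemma opnorm_less_norm_divide:
  fixes q :: real
  assumes "opnorm p K < cmod z" "0 < q" "q \<le> 1"
  shows "opnorm p K < cmod (z / q)"
proof -
  have "cmod z \<le> cmod z / q"
    using assms by (simp add: le_divide_eq mult_left_le)
  then show ?thesis
    using assms by (simp add: norm_divide)
qed

lemma norm_mfun_less: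
  assumes z: "opnorm p K + 1 < cmod z" and q: "0 < q" "q \<le> 1"
  shows "cmod (mfun p K (z / q)) < q"
proof -
  have w: "opnorm p K < cmod (z / q)"
    using z q by (intro opnorm_less_norm_divide) auto
  obtain g where "resolves (z / q) g"
    using resolves_exists[OF w] .
  then have "cmod (mfun p K (z / q)) \<le> 1 / (cmod z / q - opnorm p K)"
    using norm_mfun_le[OF w] q by (simp add: norm_divide)
  also have "\<dots> < q"
  proof -
    have "1 < cmod z - q * opnorm p K"
      using z q opnorm_nonneg mult_left_le_one_le[of "opnorm p K" q] by linarith
    also have "\<dots> = q * (cmod z / q - opnorm p K)"
      using q by (simp add: field_simps)
    finally show ?thesis
      using w q by (simp add: divide_less_eq norm_divide mult.commute)
  qed
  finally show ?thesis .
qed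

end

theorem theorem7p1:
  fixes p :: real and K :: "(real \<Rightarrow> complex) \<Rightarrow> (real \<Rightarrow> complex)" and z :: complex
  assumes "0 < p" and "p < 1"
    and "is_Kinf p K"
    and "norm z > opnorm p K + 1"
  shows "mfun p K z =
      mfun p K (z / p) / (1 - mfun p K (z / p))
    + mfun p K (z / (1 - p)) /
        ((1 - mfun p K (z / p)) * (1 - mfun p K (z / p) - mfun p K (z / (1 - p))))"
proof -
  interpret cantor_kernel p K
    using assms(1-3) by unfold_locales
  have z: "opnorm p K < cmod z"
    using assms(4) by simp
  have w: "opnorm p K < cmod (z / p)" "opnorm p K < cmod (z / (1 - p))"
    using opnorm_less_norm_divide[OF z, of p] opnorm_less_norm_divide[OF z, of "1 - p"] assms(1,2)
    by simp_all
  have small: "cmod (mfun p K (z / p)) < p" "cmod (mfun p K (z / (1 - p))) < 1 - p"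
    using norm_mfun_less[OF assms(4), of p] norm_mfun_less[OF assms(4), of "1 - p"] assms(1,2)
    by simp_all
  obtain g1 g2 where g: "resolves (z / p) g1" "resolves (z / (1 - p)) g2"
    using resolves_exists[OF w(1)] resolves_exists[OF w(2)] by metis
  have "1 - mfun p K (z / p) \<noteq> 0" "1 - mfun p K (z / p) - mfun p K (z / (1 - p)) \<noteq> 0"
    using one_diff_diff_nonzero[of "mfun p K (z / p)" 0] small
      one_diff_diff_nonzero[of "mfun p K (z / p)" "mfun p K (z / (1 - p))"] assms(2) by simp_all
  then show ?thesis
    using mfun_renewal[OF z g] renewal_fraction_identity
    unfolding mfun_eq_inner_mu[OF w(1) g(1)] mfun_eq_inner_mu[OF w(2) g(2)] by simp
qed

end
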